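(* Fix an integer $b\ge 1$. For each of the three families below, take the indicated weight sequences $(\varphi_k)_{k\ge0}$ and $(\psi_k)_{1\le k\le b-1}$, and consider the corresponding weighted family $\mathcal{T}$ of ordered increasing bucket trees with maximal bucket size $b$ (see context). Then: (A) For every ordered increasing bucket tree $T\in\mathcal{T}$ of size $n$ and every node $v\in T$, the probability under the random tree model that the new label $n+1$ is attracted by $v$, i.e. the ratio $$p_T(v)=\frac{\sum_{T':\,T\xrightarrow{v}T'} w(T')}{\sum_{T':\,T\to T'} w(T')},$$ equals the attraction probability $p(v)$ of the corresponding growth process (recalled in the context). Consequently the law of the random (unordered) tree of size $n$ produced by the growth process coincides with the law of the random unordered bucket increasing tree of size $n$ under the random tree model, for every $n\ge1$. (B) The weights, the exponential generating function $T(z)=\sum_{n\ge1}T_n z^n/n!$ and the total weights $T_n$ are: 1. Bucket recursive trees: $\varphi_k=\frac{(b-1)!\,b^k}{k!}$ ($k\ge0$), $\psi_k=(k-1)!$ ($1\le k\le b-1$), so $\varphi(t)=(b-1)!\,e^{bt}$; then $T(z)=\log\frac{1}{1-z}$ and $T_n=(n-1)!$. 2. $(b,d)$-ary increasing trees ($d\ge2$ an integer): $\varphi_k=(b-1)!(d-1)^{b-1}\binom{b-1+\frac1{d-1}}{b-1}\binom{b(d-1)+1}{k}$ ($k\ge0$), $\psi_k=(k-1)!(d-1)^{k-1}\binom{k-1+\frac1{d-1}}{k-1}$ ($1\le k\le b-1$), so $\varphi(t)=(b-1)!(d-1)^{b-1}\binom{b-1+\frac1{d-1}}{b-1}(1+t)^{b(d-1)+1}$;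 then $T(z)=(1-(d-1)z)^{-\frac1{d-1}}-1$ and $T_n=(n-1)!(d-1)^{n-1}\binom{n-1+\frac1{d-1}}{n-1}$. 3. $(b,\alpha)$-plane oriented recursive trees ($\alpha>0$ real): $\varphi_k=(b-1)!(\alpha+1)^{b-1}\binom{b-1-\frac1{\alpha+1}}{b-1}\binom{(\alpha+1)b-2+k}{k}$ ($k\ge0$), $\psi_k=(k-1)!(\alpha+1)^{k-1}\binom{k-1-\frac1{\alpha+1}}{k-1}$ ($1\le k\le b-1$), so $\varphi(t)=\frac{(b-1)!(\alpha+1)^{b-1}\binom{b-1-\frac1{\alpha+1}}{b-1}}{(1-t)^{(\alpha+1)b-1}}$; then $T(z)=1-(1-(\alpha+1)z)^{\frac1{\alpha+1}}$ and $T_n=(n-1)!(\alpha+1)^{n-1}\binom{n-1-\frac1{\alpha+1}}{n-1}$.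
   Context: Binomial coefficients with non-integer upper argument: $\binom{x}{k}=x(x-1)\cdots(x-k+1)/k!$. Ordered bucket trees: fix $b\ge1$. An ordered bucket tree is a rooted plane tree (children of each node are linearly ordered) whose nodes ("buckets") $v$ have a capacity $c(v)\in\{1,\dots,b\}$; $v$ is saturated if $c(v)=b$, and every node with at least one child must be saturated. Its size is $\sum_v c(v)$. An increasing labelling of a tree of size $n$ distributes the labels $1,\dots,n$ so that node $v$ receives $c(v)$ labels and every label of a node is smaller than all labels in its children. Given a sequence $(\varphi_k)_{k\ge0}$ of nonnegative numbers with $\varphi_0>0$ and nonnegative $\psi_1,\dots,\psi_{b-1}$, the weight of a tree is $w(T)=\prod_v w(v)$ with $w(v)=\varphi_{d^+(v)}$ if $c(v)=b$ and $w(v)=\psi_{c(v)}$ if $c(v)<b$, where $d^+(v)$ is the number of children of $v$; $\varphi(t)=\sum_k\varphi_k t^k$. $\mathcal{T}$ is the set of increasingly labelled ordered bucket trees with these weights; $T_n$ is the total weight of those of size $n$. Random tree model: a tree of size $n$ is chosen with probability $w(T)/T_n$; an unordered increasingly labelled bucket tree $U$ gets probability $w\cdot\prod_{v}d^+(v)!/T_n$ (the weight of any of its $\prod_v d^+(v)!$ ordered versions, times their number, over $T_n$). For $T$ of size $n$, $T\to T'$ means $T'$ arises from $T$ by inserting label $n+1$: either adding it to an unsaturated node, or attaching to a saturated node $u$ a new bucket containing only $n+1$ at one of the $d^+(u)+1$ possible positions among its children; $T\xrightarrow{v}T'$ means this is done at node $v$. Growth processes (unordered trees): start with a root bucket containing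 label 1; given the tree of size $n\ge1$, a node $v$ is chosen with probability $p(v)$; if $v$ is unsaturated, label $n+1$ is added to $v$, otherwise a new child bucket of $v$ containing only $n+1$ is created. Here, with capacities and out-degrees taken in the current tree of size $n$: bucket recursive trees $p(v)=c(v)/n$; $(b,d)$-ary increasing trees ($d\ge2$ integer) $p(v)=\frac{(d-1)c(v)+1-d^+(v)}{(d-1)n+1}$; $(b,\alpha)$-plane oriented recursive trees ($\alpha>0$) $p(v)=\frac{d^+(v)+(\alpha+1)c(v)-1}{(\alpha+1)n-1}$. *)

theory Defs
  imports "HOL-Analysis.Analysis" "HOL-Library.Multiset"
begin

text \<open>A node (bucket) is given by the set of labels it contains; its capacity is the
  cardinality of this set. Children are ordered (a list).\<close>
datatype ltree = LNode "nat set" "ltree list"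

datatype utree = UNode "nat set" "utree multiset"

primrec labels :: "ltree \<Rightarrow> nat set" where
  "labels (LNode L ts) = L \<union> \<Union> (set (map labels ts))"

primrec tsize :: "ltree \<Rightarrow> nat" where
  "tsize (LNode L ts) = card L + sum_list (map tsize ts)"

primrec buckets :: "ltree \<Rightarrow> nat set set" where
  "buckets (LNode L ts) = insert L (\<Union> (set (map buckets ts)))"

primrec wf_bt :: "nat \<Rightarrow> ltree \<Rightarrow> bool" where
  "wf_bt b (LNode L ts) = (1 \<le> card L \<and> card L \<le> b \<and> (ts \<noteq> [] \<longrightarrow> card L = b)
                           \<and> list_all (wf_bt b) ts)"

primrec incr :: "ltree \<Rightarrow> bool" where
  "incr (LNode L ts) = ((\<forall>t\<in>set ts. \<forall>x\<in>L. \<forall>y\<in>labels t. x < y) \<and> list_all incr ts)"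

definition OT :: "nat \<Rightarrow> nat \<Rightarrow> ltree set" where
  "OT b n = {T. wf_bt b T \<and> incr T \<and> tsize T = n \<and> labels T = {1..n}}"

primrec weight :: "(nat \<Rightarrow> real) \<Rightarrow> (nat \<Rightarrow> real) \<Rightarrow> nat \<Rightarrow> ltree \<Rightarrow> real" where
  "weight \<phi> \<psi> b (LNode L ts) =
     (if card L = b then \<phi> (length ts) else \<psi> (card L)) * prod_list (map (weight \<phi> \<psi> b) ts)"

definition Tn :: "(nat \<Rightarrow> real) \<Rightarrow> (nat \<Rightarrow> real) \<Rightarrow> nat \<Rightarrow> nat \<Rightarrow> real" where
  "Tn \<phi> \<psi> b n = (\<Sum>T\<in>OT b n. weight \<phi> \<psi> b T)"

text \<open>Out-degree of the node with label set S (nodes have distinct label sets).\<close>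
primrec bdeg :: "ltree \<Rightarrow> nat set \<Rightarrow> nat" where
  "bdeg (LNode L ts) S = (if L = S then length ts else sum_list (map (\<lambda>t. bdeg t S) ts))"

inductive ins_at :: "nat \<Rightarrow> nat \<Rightarrow> nat set \<Rightarrow> ltree \<Rightarrow> ltree \<Rightarrow> bool" where
  unsat: "card L < b \<Longrightarrow> ins_at b m L (LNode L ts) (LNode (insert m L) ts)"
| sat: "card L = b \<Longrightarrow> i \<le> length ts \<Longrightarrow>
          ins_at b m L (LNode L ts) (LNode L (take i ts @ LNode {m} [] # drop i ts))"
| down: "L \<noteq> S \<Longrightarrow> i < length ts \<Longrightarrow> ins_at b m S (ts ! i) t' \<Longrightarrow>
          ins_at b m S (LNode L ts) (LNode L (ts[i := t']))"

definition pT :: "(nat \<Rightarrow> real) \<Rightarrow> (nat \<Rightarrow> real) \<Rightarrow> nat \<Rightarrow> nat \<Rightarrow> ltree \<Rightarrow> nat set \<Rightarrow> real" where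
  "pT \<phi> \<psi> b n T v =
     (\<Sum>T'\<in>{T'. ins_at b (Suc n) v T T'}. weight \<phi> \<psi> b T') /
     (\<Sum>T'\<in>{T'. \<exists>u. ins_at b (Suc n) u T T'}. weight \<phi> \<psi> b T')"

primrec unord :: "ltree \<Rightarrow> utree" where
  "unord (LNode L ts) = UNode L (mset (map unord ts))"

primrec ubuckets :: "utree \<Rightarrow> nat set set" where
  "ubuckets (UNode L cs) = insert L (\<Union> (set_mset (image_mset ubuckets cs)))"

primrec udeg :: "utree \<Rightarrow> nat set \<Rightarrow> nat" where
  "udeg (UNode L cs) S = (if L = S then size cs else sum_mset (image_mset (\<lambda>t. udeg t S) cs))"

primrec ugrow :: "nat \<Rightarrow> nat \<Rightarrow> nat set \<Rightarrow> utree \<Rightarrow> utree" where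
  "ugrow b m S (UNode L cs) =
     (if L = S then (if card L < b then UNode (insert m L) cs
                     else UNode L (add_mset (UNode {m} {#}) cs))
      else UNode L (image_mset (ugrow b m S) cs))"

fun reach :: "nat \<Rightarrow> nat \<Rightarrow> utree set" where
  "reach b 0 = {}"
| "reach b (Suc 0) = {UNode {1} {#}}"
| "reach b (Suc (Suc n)) =
     {ugrow b (Suc (Suc n)) S U | U S. U \<in> reach b (Suc n) \<and> S \<in> ubuckets U}"

text \<open>Law of the growth process. \<open>p n c k\<close> is the probability of choosing a node of
  capacity c and out-degree k in a tree of size n.\<close>
fun gp_law :: "nat \<Rightarrow> (nat \<Rightarrow> nat \<Rightarrow> nat \<Rightarrow> real) \<Rightarrow> nat \<Rightarrow> utree \<Rightarrow> real" where
  "gp_law b p 0 U = 0"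
| "gp_law b p (Suc 0) U = (if U = UNode {1} {#} then 1 else 0)"
| "gp_law b p (Suc (Suc n)) U' =
     (\<Sum>U\<in>reach b (Suc n). gp_law b p (Suc n) U *
        (\<Sum>S\<in>ubuckets U. if ugrow b (Suc (Suc n)) S U = U'
                           then p (Suc n) (card S) (udeg U S) else 0))"

definition rt_law :: "(nat \<Rightarrow> real) \<Rightarrow> (nat \<Rightarrow> real) \<Rightarrow> nat \<Rightarrow> nat \<Rightarrow> utree \<Rightarrow> real" where
  "rt_law \<phi> \<psi> b n U =
     (\<Sum>T\<in>OT b n. if unord T = U then weight \<phi> \<psi> b T else 0) / Tn \<phi> \<psi> b n"

definition attraction_agrees ::
  "(nat \<Rightarrow> real) \<Rightarrow> (nat \<Rightarrow> real) \<Rightarrow> nat \<Rightarrow> (nat \<Rightarrow> nat \<Rightarrow> nat \<Rightarrow> real) \<Rightarrow> bool" where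
  "attraction_agrees \<phi> \<psi> b p =
     (\<forall>n T v. T \<in> OT b n \<and> weight \<phi> \<psi> b T \<noteq> 0 \<and> v \<in> buckets T \<longrightarrow>
        pT \<phi> \<psi> b n T v = p n (card v) (bdeg T v))"

definition laws_agree ::
  "(nat \<Rightarrow> real) \<Rightarrow> (nat \<Rightarrow> real) \<Rightarrow> nat \<Rightarrow> (nat \<Rightarrow> nat \<Rightarrow> nat \<Rightarrow> real) \<Rightarrow> bool" where
  "laws_agree \<phi> \<psi> b p = (\<forall>n\<ge>1. \<forall>U. gp_law b p n U = rt_law \<phi> \<psi> b n U)"

definition rec_phi :: "nat \<Rightarrow> nat \<Rightarrow> real" where
  "rec_phi b k = fact (b - 1) * real b ^ k / fact k"
definition rec_psi :: "nat \<Rightarrow> real" where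
  "rec_psi k = fact (k - 1)"
definition rec_p :: "nat \<Rightarrow> nat \<Rightarrow> nat \<Rightarrow> real" where
  "rec_p n c k = real c / real n"

definition dary_phi :: "nat \<Rightarrow> nat \<Rightarrow> nat \<Rightarrow> real" where
  "dary_phi b d k = fact (b - 1) * (real d - 1) ^ (b - 1)
      * ((real (b - 1) + 1 / (real d - 1)) gchoose (b - 1)) * real ((b * (d - 1) + 1) choose k)"
definition dary_psi :: "nat \<Rightarrow> nat \<Rightarrow> real" where
  "dary_psi d k = fact (k - 1) * (real d - 1) ^ (k - 1)
      * ((real (k - 1) + 1 / (real d - 1)) gchoose (k - 1))"
definition dary_p :: "nat \<Rightarrow> nat \<Rightarrow> nat \<Rightarrow> nat \<Rightarrow> real" where
  "dary_p d n c k = ((real d - 1) * real c + 1 - real k) / ((real d - 1) * real n + 1)"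

definition porr_phi :: "nat \<Rightarrow> real \<Rightarrow> nat \<Rightarrow> real" where
  "porr_phi b \<alpha> k = fact (b - 1) * (\<alpha> + 1) ^ (b - 1)
      * ((real (b - 1) - 1 / (\<alpha> + 1)) gchoose (b - 1))
      * (((\<alpha> + 1) * real b - 2 + real k) gchoose k)"
definition porr_psi :: "real \<Rightarrow> nat \<Rightarrow> real" where
  "porr_psi \<alpha> k = fact (k - 1) * (\<alpha> + 1) ^ (k - 1)
      * ((real (k - 1) - 1 / (\<alpha> + 1)) gchoose (k - 1))"
definition porr_p :: "real \<Rightarrow> nat \<Rightarrow> nat \<Rightarrow> nat \<Rightarrow> real" where
  "porr_p \<alpha> n c k = (real k + (\<alpha> + 1) * real c - 1) / ((\<alpha> + 1) * real n - 1)"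

end

(*
  Inserting the label n + 1 at a node v of a tree T of size n multiplies the weight by
  psi_{c+1}/psi_c if v is unsaturated of capacity c, and creates k + 1 trees of weight
  w(T) phi_{k+1}/phi_k each if v is saturated with k children. For all three families these
  factors are affine: psi_{c+1} = psi_c (a c + beta) and (k + 1) phi_{k+1} = phi_k (a b + beta (1 - k)),
  with (a, beta) = (1, 0), (d - 1, 1) and (alpha + 1, -1) respectively. Hence the insertions at v
  carry total weight w(T) (a c(v) + beta (1 - d(v))). Summed over all nodes this is w(T) (a n + beta),
  because the capacities add up to n and the out-degrees to the number of nodes minus one.
  Consequently T_{n+1} = (a n + beta) T_n, the attraction probability of v is
  (a c(v) + beta (1 - d(v))) / (a n + beta), which is exactly p(v), and the two laws on unordered
  trees agree by induction on n. The generating functions follow from the (generalised) binomial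
  theorem and the logarithmic series.
*)

theory Submission
  imports Defs
begin

lemma card_Union_list_le:
  assumes "\<forall>A\<in>set As. finite A"
  shows "card (\<Union>(set As)) \<le> sum_list (map card As)"
  using assms
proof (induction As)
  case (Cons A As)
  then show ?case using card_Un_le[of A "\<Union>(set As)"] by simp
qed simp

lemma card_Union_list_eq_imp_disjoint:
  assumes "\<forall>A\<in>set As. finite A" "card (\<Union>(set As)) = sum_list (map card As)"
    and "i < length As" "j < length As" "i \<noteq> j"
  shows "As!i \<inter> As!j = {}"
  using assms
proof (induction As arbitrary: i j)
  case (Cons A As)
  let ?U = "\<Union>(set As)"
  have fin: "finite A" "finite ?U" using Cons.prems(1) by auto
  have "card ?U \<le> sum_list (map card As)" using Cons.prems(1) by (intro card_Union_list_le) simp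
  moreover have "card (A \<union> ?U) = card A + sum_list (map card As)" using Cons.prems(2) by simp
  moreover note card_Un_Int[OF fin]
  ultimately have eq: "card ?U = sum_list (map card As)" and "card (A \<inter> ?U) = 0" by linarith+
  then have disj: "A \<inter> ?U = {}" using fin by simp
  show ?case
  proof (cases i; cases j)
    fix i' j' assume "i = Suc i'" "j = Suc j'"
    then show ?thesis using Cons.IH[OF _ eq, of i' j'] Cons.prems by simp
  qed (use Cons.prems disj in \<open>auto dest: nth_mem\<close>)
qed simp

lemma sum_list_mono_eq:
  fixes f g :: "'a \<Rightarrow> nat"
  assumes "\<And>x. x \<in> set xs \<Longrightarrow> f x \<le> g x" "sum_list (map f xs) = sum_list (map g xs)"
    and "x \<in> set xs"
  shows "f x = g x"
  using assms
proof (induction xs)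
  case (Cons y xs)
  have "sum_list (map f xs) \<le> sum_list (map g xs)" using Cons.prems(1) by (simp add: sum_list_mono)
  then show ?case using Cons by fastforce
qed simp

lemma set_conv_remove_nth:
  assumes "i < length xs"
  shows "set xs = insert (xs!i) (set (take i xs @ drop (Suc i) xs))"
proof -
  have "set xs = set (take i xs @ xs!i # drop (Suc i) xs)"
    using id_take_nth_drop[OF assms] by (rule arg_cong)
  then show ?thesis by auto
qed

lemma inj_on_insert_nth:
  assumes "x \<notin> set xs"
  shows "inj_on (\<lambda>i. take i xs @ x # drop i xs) {..length xs}"
proof (rule inj_on_inverseI)
  fix i assume "i \<in> {..length xs}"
  moreover have "y \<noteq> x" if "y \<in> set (take i xs)" for y
    using assms that by (auto dest: in_set_takeD)
  ultimately show "length (takeWhile (\<lambda>y. y \<noteq> x) (take i xs @ x # drop i xs)) = i"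
    by (simp add: takeWhile_append2)
qed

lemma prod_list_map_take_drop:
  "prod_list (map f (take i xs)) * prod_list (map f (drop i xs)) = prod_list (map f xs)"
  by (metis append_take_drop_id map_append prod_list.append)

lemma prod_list_map_update:
  fixes f :: "'a \<Rightarrow> 'b::comm_monoid_mult"
  assumes "i < length xs"
  shows "prod_list (map f (xs[i := y])) = f y * prod_list (map f (take i xs @ drop (Suc i) xs))"
  using assms by (simp add: upd_conv_take_nth_drop ac_simps)

section \<open>Labels and buckets\<close>

(* Nodes are addressed by their label sets (buckets, bdeg, ins_at), which is faithful as long as
   these sets are pairwise disjoint. This holds on OT b n, where n labels fill n slots. *)
primrec disjoint_labels :: "ltree \<Rightarrow> bool" where
  "disjoint_labels (LNode L ts) \<longleftrightarrow>
     (\<forall>j<length ts. L \<inter> labels (ts!j) = {})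
     \<and> (\<forall>i<length ts. \<forall>j<length ts. i \<noteq> j \<longrightarrow> labels (ts!i) \<inter> labels (ts!j) = {})
     \<and> list_all disjoint_labels ts"

lemma finite_labels: "wf_bt b T \<Longrightarrow> finite (labels T)"
  by (induction T) (auto simp: list_all_iff intro: card_ge_0_finite)

lemma card_labels_le_tsize: "wf_bt b T \<Longrightarrow> card (labels T) \<le> tsize T"
proof (induction T)
  case (LNode L ts)
  have "\<forall>A\<in>set (L # map labels ts). finite A"
    using LNode.prems finite_labels[of b] by (auto simp: list_all_iff intro: card_ge_0_finite)
  then have "card (labels (LNode L ts)) \<le> sum_list (map card (L # map labels ts))"
    using card_Union_list_le[of "L # map labels ts"] by simp
  also have "\<dots> = card L + (\<Sum>t\<leftarrow>ts. card (labels t))" by (simp add: o_def)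
  also have "\<dots> \<le> tsize (LNode L ts)"
    using LNode by (auto simp: list_all_iff intro!: sum_list_mono)
  finally show ?case .
qed

lemma disjoint_labels_if_card_eq_tsize:
  "wf_bt b T \<Longrightarrow> card (labels T) = tsize T \<Longrightarrow> disjoint_labels T"
proof (induction T)
  case (LNode L ts)
  let ?As = "L # map labels ts"
  have wf: "\<forall>t\<in>set ts. wf_bt b t" using LNode.prems(1) by (simp add: list_all_iff)
  have fin: "\<forall>A\<in>set ?As. finite A"
    using LNode.prems(1) finite_labels[of b] by (auto simp: list_all_iff intro: card_ge_0_finite)
  have le: "card (labels t) \<le> tsize t" if "t \<in> set ts" for t
    using wf that card_labels_le_tsize by blast
  have "card (\<Union>(set ?As)) \<le> sum_list (map card ?As)" using card_Union_list_le[OF fin] .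
  moreover have "(\<Sum>t\<leftarrow>ts. card (labels t)) \<le> sum_list (map tsize ts)"
    using le by (rule sum_list_mono)
  ultimately have eqU: "card (\<Union>(set ?As)) = sum_list (map card ?As)"
    and eqs: "(\<Sum>t\<leftarrow>ts. card (labels t)) = sum_list (map tsize ts)"
    using LNode.prems(2) by (simp_all add: o_def)
  have "disjoint_labels t" if "t \<in> set ts" for t
    using LNode.IH that wf sum_list_mono_eq[OF le eqs that] by blast
  moreover have "L \<inter> labels (ts!j) = {}" if "j < length ts" for j
    using card_Union_list_eq_imp_disjoint[OF fin eqU, of 0 "Suc j"] that by simp
  moreover have "labels (ts!i) \<inter> labels (ts!j) = {}" if "i < length ts" "j < length ts" "i \<noteq> j" for i j
    using card_Union_list_eq_imp_disjoint[OF fin eqU, of "Suc i" "Suc j"] that by simp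
  ultimately show ?case by (simp add: list_all_iff)
qed

lemma OT_disjoint_labels: "T \<in> OT b n \<Longrightarrow> disjoint_labels T"
  by (auto simp: OT_def intro: disjoint_labels_if_card_eq_tsize)

lemma bucket_subset_labels: "v \<in> buckets T \<Longrightarrow> v \<subseteq> labels T"
  by (induction T) auto

lemma wf_bt_bucket_nonempty: "wf_bt b T \<Longrightarrow> v \<in> buckets T \<Longrightarrow> v \<noteq> {}"
  by (induction T) (auto simp: list_all_iff)

lemma finite_buckets: "finite (buckets T)"
  by (induction T) auto

lemma wf_bt_labels_nonempty: "wf_bt b T \<Longrightarrow> labels T \<noteq> {}"
  by (cases T) auto

lemma disjoint_labels_other_child:
  assumes "disjoint_labels (LNode L (xs @ t # ys))" "t' \<in> set xs \<union> set ys"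
  shows "labels t' \<inter> labels t = {}"
proof -
  let ?ts = "xs @ t # ys" and ?i = "length xs"
  from assms(2) obtain j where j: "j < length ?ts" "j \<noteq> ?i" "t' = ?ts!j"
  proof
    assume "t' \<in> set xs"
    then obtain j where "j < ?i" "t' = xs!j" by (auto simp: in_set_conv_nth)
    then show thesis using that[of j] by (simp add: nth_append)
  next
    assume "t' \<in> set ys"
    then obtain k where "k < length ys" "t' = ys!k" by (auto simp: in_set_conv_nth)
    then show thesis using that[of "Suc ?i + k"] by (simp add: nth_append)
  qed
  have "\<forall>i<length ?ts. \<forall>j<length ?ts. i \<noteq> j \<longrightarrow> labels (?ts!i) \<inter> labels (?ts!j) = {}"
    using assms(1) by simp
  moreover have "?i < length ?ts" "?ts!?i = t" by simp_all
  ultimately show ?thesis using j by metis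
qed

lemma bucket_in_unique_child:
  assumes "disjoint_labels (LNode L ts)" "wf_bt b (LNode L ts)" "i < length ts" "j < length ts"
    and "v \<in> buckets (ts!i)" "v \<in> buckets (ts!j)"
  shows "i = j"
proof (rule ccontr)
  assume "i \<noteq> j"
  then have "labels (ts!i) \<inter> labels (ts!j) = {}" using assms(1,3,4) by simp
  moreover have "wf_bt b (ts!i)" using assms(2,3) by (simp add: list_all_iff)
  then have "v \<noteq> {}" using wf_bt_bucket_nonempty assms(5) by blast
  ultimately show False using bucket_subset_labels[OF assms(5)] bucket_subset_labels[OF assms(6)] by blast
qed

lemma root_notin_child_buckets:
  assumes "disjoint_labels (LNode L ts)" "wf_bt b (LNode L ts)" "j < length ts"
  shows "L \<notin> buckets (ts!j)"
proof
  assume "L \<in> buckets (ts!j)"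
  then have "L \<subseteq> labels (ts!j)" by (rule bucket_subset_labels)
  moreover have "L \<inter> labels (ts!j) = {}" using assms(1,3) by simp
  moreover have "L \<noteq> {}" using assms(2) by auto
  ultimately show False by blast
qed

lemma bdeg_notin_buckets: "S \<notin> buckets t \<Longrightarrow> bdeg t S = 0"
  by (induction t) (auto simp: sum_list_eq_0_iff)

lemma bdeg_child:
  assumes "disjoint_labels (LNode L ts)" "wf_bt b (LNode L ts)" "j < length ts" "v \<in> buckets (ts!j)"
  shows "bdeg (LNode L ts) v = bdeg (ts!j) v"
proof -
  have "L \<noteq> v" using root_notin_child_buckets[OF assms(1-3)] assms(4) by blast
  then have "bdeg (LNode L ts) v = (\<Sum>k<length ts. bdeg (ts!k) v)"
    by (simp add: sum_list_sum_nth atLeast0LessThan)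
  also have "\<dots> = (\<Sum>k\<in>{j}. bdeg (ts!k) v)"
  proof (rule sum.mono_neutral_right)
    show "\<forall>k\<in>{..<length ts} - {j}. bdeg (ts!k) v = 0"
      using bucket_in_unique_child[OF assms(1,2) _ assms(3) _ assms(4)] bdeg_notin_buckets by blast
  qed (use assms(3) in auto)
  finally show ?thesis by simp
qed

primrec tree_sum :: "(nat set \<Rightarrow> nat \<Rightarrow> real) \<Rightarrow> ltree \<Rightarrow> real" where
  "tree_sum f (LNode L ts) = f L (length ts) + sum_list (map (tree_sum f) ts)"

lemma sum_buckets_eq_tree_sum:
  "wf_bt b T \<Longrightarrow> disjoint_labels T \<Longrightarrow> (\<Sum>v\<in>buckets T. f v (bdeg T v)) = tree_sum f T"
proof (induction T)
  case (LNode L ts)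
  let ?T = "LNode L ts" and ?B = "\<lambda>k. buckets (ts!k)"
  have "set ts = (!) ts ` {..<length ts}" by (auto simp: in_set_conv_nth)
  then have buckets: "buckets ?T = insert L (\<Union>k<length ts. ?B k)" by (simp add: image_image)
  have "L \<notin> (\<Union>k<length ts. ?B k)" using root_notin_child_buckets[OF LNode.prems(2,1)] by blast
  then have "(\<Sum>v\<in>buckets ?T. f v (bdeg ?T v))
      = f L (length ts) + (\<Sum>v\<in>(\<Union>k<length ts. ?B k). f v (bdeg ?T v))"
    unfolding buckets by (simp add: finite_buckets)
  also have "(\<Sum>v\<in>(\<Union>k<length ts. ?B k). f v (bdeg ?T v))
      = (\<Sum>k<length ts. \<Sum>v\<in>?B k. f v (bdeg ?T v))"
  proof (rule sum.UNION_disjoint)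
    show "\<forall>i\<in>{..<length ts}. \<forall>j\<in>{..<length ts}. i \<noteq> j \<longrightarrow> ?B i \<inter> ?B j = {}"
      using bucket_in_unique_child[OF LNode.prems(2,1)] by blast
  qed (simp_all add: finite_buckets)
  also have "\<dots> = (\<Sum>k<length ts. tree_sum f (ts!k))"
  proof (rule sum.cong[OF refl])
    fix k assume k: "k \<in> {..<length ts}"
    then have "wf_bt b (ts!k)" "disjoint_labels (ts!k)" using LNode.prems by (auto simp: list_all_iff)
    moreover have "(\<Sum>v\<in>?B k. f v (bdeg ?T v)) = (\<Sum>v\<in>?B k. f v (bdeg (ts!k) v))"
      using bdeg_child[OF LNode.prems(2,1)] k by (intro sum.cong) auto
    ultimately show "(\<Sum>v\<in>?B k. f v (bdeg ?T v)) = tree_sum f (ts!k)"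
      using LNode.IH k by simp
  qed
  finally show ?case by (simp add: sum_list_sum_nth atLeast0LessThan)
qed

lemma tree_sum_affine: "tree_sum (\<lambda>v k. a * real (card v) + c * (1 - real k)) T = a * real (tsize T) + c"
proof (induction T)
  case (LNode L ts)
  let ?f = "\<lambda>v k. a * real (card v) + c * (1 - real k)"
  have "(\<Sum>t\<leftarrow>ts. tree_sum ?f t) = (\<Sum>t\<leftarrow>ts. a * real (tsize t) + c)"
    by (rule arg_cong[where f = sum_list], rule map_cong) (simp_all add: LNode.IH)
  also have "\<dots> = a * (\<Sum>t\<leftarrow>ts. real (tsize t)) + c * real (length ts)"
    by (simp add: sum_list_addf sum_list_const_mult sum_list_triv)
  finally show ?case by (simp add: algebra_simps sum_list_of_nat[symmetric] o_def)
qed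

section \<open>Inserting a label\<close>

lemma ins_at_split_induct[consumes 1, case_names unsat sat down]:
  assumes "ins_at b m S T T'"
    and "\<And>L ts. card L < b \<Longrightarrow> P L (LNode L ts) (LNode (insert m L) ts)"
    and "\<And>L xs ys. card L = b \<Longrightarrow> P L (LNode L (xs @ ys)) (LNode L (xs @ LNode {m} [] # ys))"
    and "\<And>L S xs t ys t'. L \<noteq> S \<Longrightarrow> ins_at b m S t t' \<Longrightarrow> P S t t' \<Longrightarrow>
           P S (LNode L (xs @ t # ys)) (LNode L (xs @ t' # ys))"
  shows "P S T T'"
proof -
  have "ins_at b' m' S T T' \<Longrightarrow> b' = b \<Longrightarrow> m' = m \<Longrightarrow> P S T T'" for b' m'
  proof (induction rule: ins_at.induct)
    case (unsat L b' m' ts)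
    then show ?case using assms(2) by blast
  next
    case (sat L b' i ts m')
    have "P L (LNode L (take i ts @ drop i ts)) (LNode L (take i ts @ LNode {m} [] # drop i ts))"
      by (rule assms(3)) (use sat in simp)
    then show ?case using sat by simp
  next
    case (down L S i ts b' m' t')
    have "P S (LNode L (take i ts @ ts!i # drop (Suc i) ts)) (LNode L (take i ts @ t' # drop (Suc i) ts))"
      by (rule assms(4)) (use down in auto)
    then show ?case using down by (simp add: upd_conv_take_nth_drop id_take_nth_drop[symmetric])
  qed
  then show ?thesis using assms(1) by blast
qed

lemma ins_at_in_buckets: "ins_at b m S T T' \<Longrightarrow> S \<in> buckets T"
  by (induction rule: ins_at_split_induct) auto

lemma ins_at_labels: "ins_at b m S T T' \<Longrightarrow> labels T' = insert m (labels T)"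
  by (induction rule: ins_at_split_induct) auto

lemma ins_at_tsize:
  "ins_at b m S T T' \<Longrightarrow> wf_bt b T \<Longrightarrow> m \<notin> labels T \<Longrightarrow> tsize T' = Suc (tsize T)"
  by (induction rule: ins_at_split_induct) (auto simp: card_insert_if card_ge_0_finite)

lemma ins_at_wf_bt:
  "ins_at b m S T T' \<Longrightarrow> 1 \<le> b \<Longrightarrow> wf_bt b T \<Longrightarrow> m \<notin> labels T \<Longrightarrow> wf_bt b T'"
  by (induction rule: ins_at_split_induct) (auto simp: card_insert_if card_ge_0_finite)

lemma ins_at_incr:
  "ins_at b m S T T' \<Longrightarrow> wf_bt b T \<Longrightarrow> incr T \<Longrightarrow> \<forall>x\<in>labels T. x < m \<Longrightarrow> incr T'"
proof (induction rule: ins_at_split_induct)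
  case (down L S xs t ys t')
  then show ?case by (auto simp: ins_at_labels)
qed auto

lemma ins_at_unique_bucket: "ins_at b m u T T' \<Longrightarrow> m \<notin> labels T \<Longrightarrow> ins_at b m v T T' \<Longrightarrow> u = v"
proof (induction arbitrary: v rule: ins_at.induct)
  case (unsat L b m ts)
  from unsat.prems(2) show ?case by cases (use unsat.prems(1) in auto)
next
  case (sat L b i ts m)
  from sat.prems(2) show ?case
  proof cases
    case (down j t')
    then have "length (ts[j:=t']) = length (take i ts @ LNode {m} [] # drop i ts)" by simp
    then show ?thesis using sat.hyps(2) by simp
  qed (use sat.prems(1) in auto)
next
  case (down L S i ts b m t1)
  have m: "m \<notin> labels (ts!i)" using down.prems(1) down.hyps(2) by auto
  from down.prems(2) show ?case
  proof cases
    case unsat then show ?thesis using down.prems(1) by auto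
  next
    case (sat j)
    then have "length (ts[i:=t1]) = length (take j ts @ LNode {m} [] # drop j ts)" by simp
    then show ?thesis using \<open>j \<le> length ts\<close> by simp
  next
    case (down j t2)
    then have eq: "ts[i:=t1] = ts[j:=t2]" by simp
    show ?thesis
    proof (cases "i = j")
      case True
      then have "t1 = t2" using eq down.hyps(2) by (metis nth_list_update_eq)
      then show ?thesis using down.IH[OF m] down True by simp
    next
      case False
      then have "t1 = ts!i" using eq down.hyps(2) by (metis nth_list_update_eq nth_list_update_neq)
      then show ?thesis using ins_at_labels[OF down.hyps(3)] m by auto
    qed
  qed
qed

primrec remove_label :: "nat \<Rightarrow> ltree \<Rightarrow> ltree" where
  "remove_label m (LNode L ts) =
     LNode (L - {m}) (filter (\<lambda>t. t \<noteq> LNode {} []) (map (remove_label m) ts))"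

lemma remove_label_absent: "wf_bt b T \<Longrightarrow> m \<notin> labels T \<Longrightarrow> remove_label m T = T"
proof (induction T)
  case (LNode L ts)
  then have "map (remove_label m) ts = ts" by (auto simp: list_all_iff intro: map_idI)
  moreover have "LNode {} [] \<notin> set ts" using LNode.prems(1) by (auto simp: list_all_iff)
  ultimately show ?case using LNode.prems(2) by (auto intro: filter_True)
qed

lemma remove_label_children_absent:
  "list_all (wf_bt b) ts \<Longrightarrow> \<forall>t\<in>set ts. m \<notin> labels t \<Longrightarrow>
   filter (\<lambda>t. t \<noteq> LNode {} []) (map (remove_label m) ts) = ts"
proof (induction ts)
  case (Cons t ts)
  then have "remove_label m t = t" "t \<noteq> LNode {} []" using remove_label_absent[of b t m] by auto
  then show ?case using Cons by simp
qed simp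

lemma remove_label_ins_at:
  "ins_at b m S T T' \<Longrightarrow> wf_bt b T \<Longrightarrow> m \<notin> labels T \<Longrightarrow> remove_label m T' = T"
proof (induction rule: ins_at_split_induct)
  case (unsat L ts)
  then show ?case by (simp add: remove_label_children_absent[of b])
next
  case (sat L xs ys)
  then show ?case by (simp add: remove_label_children_absent[of b])
next
  case (down L S xs t ys t')
  then have "wf_bt b t" "m \<notin> labels t" by auto
  then have "remove_label m t' = t" "t \<noteq> LNode {} []" using down.IH by auto
  then show ?case using down.prems by (simp add: remove_label_children_absent[of b])
qed

lemma ins_at_unique_tree:
  "ins_at b m u T1 T' \<Longrightarrow> ins_at b m v T2 T' \<Longrightarrow> wf_bt b T1 \<Longrightarrow> wf_bt b T2 \<Longrightarrow>
   m \<notin> labels T1 \<Longrightarrow> m \<notin> labels T2 \<Longrightarrow> T1 = T2"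
  by (metis remove_label_ins_at)

lemma childless_if_max_label:
  assumes "wf_bt b (LNode L ts)" "incr (LNode L ts)" "m \<in> L" "\<forall>x\<in>labels (LNode L ts). x \<le> m"
  shows "ts = []"
proof (rule ccontr)
  assume "ts \<noteq> []"
  then obtain t where t: "t \<in> set ts" by (cases ts) auto
  with assms(1) have "labels t \<noteq> {}" by (auto simp: list_all_iff dest: wf_bt_labels_nonempty)
  then obtain y where y: "y \<in> labels t" by blast
  then have "m < y" using assms(2,3) t by auto
  moreover have "y \<le> m" using assms(4) t y by auto
  ultimately show False by simp
qed

lemma singleton_labels_leaf:
  assumes "wf_bt b T" "incr T" "labels T = {m}"
  shows "T = LNode {m} []"
proof (cases T)
  case (LNode L ts)
  have "L \<noteq> {}" using assms(1) LNode by auto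
  then have L: "L = {m}" using assms(3) LNode by auto
  have "\<forall>x\<in>labels (LNode L ts). x \<le> m" using assms(3) LNode by simp
  moreover have "wf_bt b (LNode L ts)" "incr (LNode L ts)" using assms(1,2) LNode by simp_all
  ultimately have "ts = []" using childless_if_max_label L by blast
  then show ?thesis using LNode L by simp
qed

lemma other_child_lacks_label:
  assumes "disjoint_labels (LNode L ts)" "i < length ts" "m \<in> labels (ts!i)"
    and "t \<in> set (take i ts @ drop (Suc i) ts)"
  shows "m \<notin> labels t"
  using disjoint_labels_other_child[of L "take i ts" "ts!i" "drop (Suc i) ts" t] assms
  by (auto simp flip: id_take_nth_drop)

lemma ins_at_pred_root:
  assumes "wf_bt b (LNode L ts)" "incr (LNode L ts)" "m \<in> L"
    and "\<forall>x\<in>labels (LNode L ts). x \<le> m" "labels (LNode L ts) \<noteq> {m}"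
  shows "\<exists>T u. ins_at b m u T (LNode L ts) \<and> wf_bt b T \<and> incr T \<and> labels T = labels (LNode L ts) - {m}"
proof -
  have ts: "ts = []" using childless_if_max_label assms(1-4) by blast
  have fin: "finite L" using assms(1) by (simp add: card_ge_0_finite)
  have "L - {m} \<noteq> {}" using assms(3,5) ts by auto
  then have pos: "1 \<le> card (L - {m})" using fin by (simp add: Suc_le_eq card_gt_0_iff)
  have "card (L - {m}) < b" using assms(1,3) fin by (auto simp: card_Diff_singleton)
  then have "ins_at b m (L - {m}) (LNode (L - {m}) []) (LNode (insert m (L - {m})) [])"
    by (rule ins_at.unsat)
  then have "ins_at b m (L - {m}) (LNode (L - {m}) []) (LNode L ts)"
    using assms(3) ts by (simp add: insert_absorb)
  moreover have "wf_bt b (LNode (L - {m}) [])" using pos \<open>card (L - {m}) < b\<close> by simp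
  ultimately show ?thesis
    using ts by (intro exI[of _ "LNode (L - {m}) []"] exI[of _ "L - {m}"]) simp
qed

lemma ins_at_pred_leaf:
  assumes "wf_bt b (LNode L ts)" "incr (LNode L ts)" "disjoint_labels (LNode L ts)"
    and "i < length ts" "ts!i = LNode {m} []"
  shows "\<exists>T u. ins_at b m u T (LNode L ts) \<and> wf_bt b T \<and> incr T \<and> labels T = labels (LNode L ts) - {m}"
proof -
  let ?ts = "take i ts @ drop (Suc i) ts"
  have ts: "ts = take i ?ts @ LNode {m} [] # drop i ?ts"
    using id_take_nth_drop[OF assms(4)] assms(4,5) by simp
  have "card L = b" using assms(1,4) by auto
  then have "ins_at b m L (LNode L ?ts) (LNode L (take i ?ts @ LNode {m} [] # drop i ?ts))"
    using assms(4) by (intro ins_at.sat) simp_all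
  then have ins: "ins_at b m L (LNode L ?ts) (LNode L ts)" using ts by simp
  have sub: "set ?ts \<subseteq> set ts" by (auto dest: in_set_takeD in_set_dropD)
  have wf: "wf_bt b (LNode L ?ts)" and inc: "incr (LNode L ?ts)"
    using assms(1,2) sub \<open>card L = b\<close> by (auto simp: list_all_iff)
  have m: "m \<in> labels (ts!i)" using assms(5) by simp
  then have "m \<notin> labels (LNode L ?ts)"
    using assms(3,4) other_child_lacks_label[OF assms(3,4) m] by auto
  moreover have "labels (LNode L ts) = insert m (labels (LNode L ?ts))"
    using set_conv_remove_nth[OF assms(4)] assms(5) by auto
  ultimately have "labels (LNode L ?ts) = labels (LNode L ts) - {m}"
    by (metis Diff_insert_absorb)
  then show ?thesis using ins wf inc by blast
qed

lemma ins_at_pred_child: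
  assumes "wf_bt b (LNode L ts)" "incr (LNode L ts)" "disjoint_labels (LNode L ts)"
    and "i < length ts" "m \<in> labels (ts!i)"
    and "ins_at b m u t0 (ts!i)" "wf_bt b t0" "incr t0" "labels t0 = labels (ts!i) - {m}"
  shows "\<exists>T u. ins_at b m u T (LNode L ts) \<and> wf_bt b T \<and> incr T \<and> labels T = labels (LNode L ts) - {m}"
proof -
  let ?ts = "ts[i:=t0]"
  have "u \<in> buckets t0" using assms(6) by (rule ins_at_in_buckets)
  then have "u \<subseteq> labels (ts!i)" "u \<noteq> {}"
    using bucket_subset_labels assms(7,9) wf_bt_bucket_nonempty by blast+
  then have "L \<noteq> u" using assms(3,4) by auto
  then have "ins_at b m u (LNode L ?ts) (LNode L (?ts[i := ts!i]))"
    using assms(4,6) by (intro ins_at.down) simp_all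
  then have ins: "ins_at b m u (LNode L ?ts) (LNode L ts)" by simp
  have sub: "set ?ts \<subseteq> insert t0 (set ts)" by (rule set_update_subset_insert)
  have "ts!i \<in> set ts" using assms(4) by simp
  then have "\<forall>x\<in>L. \<forall>y\<in>labels t0. x < y" using assms(2,9) by auto
  then have wf: "wf_bt b (LNode L ?ts)" and inc: "incr (LNode L ?ts)"
    using assms(1,2,7,8) sub by (auto simp: list_all_iff)
  let ?others = "\<Union>(labels ` set (take i ts @ drop (Suc i) ts))"
  have "labels (LNode L ts) = L \<union> labels (ts!i) \<union> ?others"
    using set_conv_remove_nth[OF assms(4)] by auto
  moreover have "labels (LNode L ?ts) = L \<union> labels t0 \<union> ?others"
    using set_conv_remove_nth[of i ?ts] assms(4) by (simp add: drop_update_cancel Un_assoc)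
  moreover have "m \<notin> L" "m \<notin> ?others"
    using assms(3-5) other_child_lacks_label[OF assms(3-5)] by auto
  ultimately have "labels (LNode L ?ts) = labels (LNode L ts) - {m}"
    using assms(9) by auto
  then show ?thesis using ins wf inc by blast
qed

lemma ins_at_exists_pred:
  "wf_bt b T' \<Longrightarrow> incr T' \<Longrightarrow> disjoint_labels T' \<Longrightarrow> m \<in> labels T' \<Longrightarrow>
   \<forall>x\<in>labels T'. x \<le> m \<Longrightarrow> labels T' \<noteq> {m} \<Longrightarrow>
   \<exists>T u. ins_at b m u T T' \<and> wf_bt b T \<and> incr T \<and> labels T = labels T' - {m}"
proof (induction T')
  case (LNode L ts)
  show ?case
  proof (cases "m \<in> L")
    case True
    then show ?thesis using ins_at_pred_root LNode.prems by blast
  next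
    case False
    then obtain i where i: "i < length ts" "m \<in> labels (ts!i)"
      using LNode.prems(4) by (auto simp: in_set_conv_nth)
    have child: "wf_bt b (ts!i)" "incr (ts!i)" "disjoint_labels (ts!i)" "\<forall>x\<in>labels (ts!i). x \<le> m"
      using LNode.prems(1-3,5) i(1) by (auto simp: list_all_iff)
    show ?thesis
    proof (cases "labels (ts!i) = {m}")
      case True
      then have "ts!i = LNode {m} []" using singleton_labels_leaf child(1,2) by blast
      then show ?thesis using ins_at_pred_leaf LNode.prems(1-3) i(1) by blast
    next
      case False
      then obtain t0 u where "ins_at b m u t0 (ts!i)" "wf_bt b t0" "incr t0" "labels t0 = labels (ts!i) - {m}"
        using LNode.IH[OF nth_mem[OF i(1)]] child i(2) by blast
      then show ?thesis using ins_at_pred_child LNode.prems(1-3) i by blast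
    qed
  qed
qed

lemma insertions_at_root_unsat:
  "card L < b \<Longrightarrow> {T'. ins_at b m L (LNode L ts) T'} = {LNode (insert m L) ts}"
  by (auto elim: ins_at.cases intro: ins_at.unsat)

lemma insertions_at_root_sat:
  "card L = b \<Longrightarrow> {T'. ins_at b m L (LNode L ts) T'} =
     (\<lambda>i. LNode L (take i ts @ LNode {m} [] # drop i ts)) ` {..length ts}"
  by (auto elim: ins_at.cases intro: ins_at.sat)

lemma insertions_in_child:
  assumes "disjoint_labels (LNode L ts)" "wf_bt b (LNode L ts)" "i < length ts" "v \<in> buckets (ts!i)"
  shows "{T'. ins_at b m v (LNode L ts) T'} = (\<lambda>t'. LNode L (ts[i := t'])) ` {t'. ins_at b m v (ts!i) t'}"
proof
  have "L \<noteq> v" using root_notin_child_buckets[OF assms(1-3)] assms(4) by blast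
  then show "(\<lambda>t'. LNode L (ts[i := t'])) ` {t'. ins_at b m v (ts!i) t'} \<subseteq> {T'. ins_at b m v (LNode L ts) T'}"
    using assms(3) by (auto intro: ins_at.down)
  show "{T'. ins_at b m v (LNode L ts) T'} \<subseteq> (\<lambda>t'. LNode L (ts[i := t'])) ` {t'. ins_at b m v (ts!i) t'}"
  proof
    fix T' assume "T' \<in> {T'. ins_at b m v (LNode L ts) T'}"
    then have "ins_at b m v (LNode L ts) T'" by simp
    then show "T' \<in> (\<lambda>t'. LNode L (ts[i := t'])) ` {t'. ins_at b m v (ts!i) t'}"
    proof cases
      case (down j t')
      then have "j = i"
        using bucket_in_unique_child[OF assms(1,2) _ assms(3) _ assms(4)] ins_at_in_buckets by blast
      then show ?thesis using down by auto
    qed (use \<open>L \<noteq> v\<close> in auto)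
  qed
qed

lemma finite_insertions: "finite {T'. ins_at b m v T T'}"
proof (induction T)
  case (LNode L ts)
  let ?S = "{LNode (insert m L) ts}
      \<union> (\<lambda>i. LNode L (take i ts @ LNode {m} [] # drop i ts)) ` {..length ts}
      \<union> (\<Union>i<length ts. (\<lambda>t'. LNode L (ts[i := t'])) ` {t'. ins_at b m v (ts!i) t'})"
  have sub: "{T'. ins_at b m v (LNode L ts) T'} \<subseteq> ?S"
  proof
    fix T' assume "T' \<in> {T'. ins_at b m v (LNode L ts) T'}"
    then have "ins_at b m v (LNode L ts) T'" by simp
    then show "T' \<in> ?S"
    proof cases
      case (sat i)
      then show ?thesis by (intro UnI1 UnI2 image_eqI[of _ _ i]) simp_all
    next
      case (down i t')
      then show ?thesis by (intro UnI2 UN_I[of i] image_eqI[of _ _ t']) simp_all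
    qed simp
  qed
  have "finite {t'. ins_at b m v (ts!i) t'}" if "i < length ts" for i
    using LNode.IH that by simp
  then show ?case by (intro finite_subset[OF sub]) auto
qed

lemma all_insertions_eq: "{T'. \<exists>u. ins_at b m u T T'} = (\<Union>u\<in>buckets T. {T'. ins_at b m u T T'})"
  by (auto intro: ins_at_in_buckets)

lemma finite_all_insertions: "finite {T'. \<exists>u. ins_at b m u T T'}"
  unfolding all_insertions_eq by (intro finite_UN_I finite_buckets finite_insertions)

section \<open>Increasingly labelled trees of a given size\<close>

lemma OT_insertable:
  assumes "T \<in> OT b n"
  shows "wf_bt b T" "disjoint_labels T" "Suc n \<notin> labels T"
  using assms OT_disjoint_labels by (auto simp: OT_def)

lemma OT_0: "OT b 0 = {}"
  by (auto simp: OT_def dest: wf_bt_labels_nonempty)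

lemma OT_1:
  assumes "1 \<le> b"
  shows "OT b 1 = {LNode {1} []}"
proof
  show "OT b 1 \<subseteq> {LNode {1} []}"
  proof
    fix T assume "T \<in> OT b 1"
    then have "wf_bt b T" "incr T" "labels T = {1}" by (auto simp: OT_def)
    then show "T \<in> {LNode {1} []}" using singleton_labels_leaf by blast
  qed
  show "{LNode {1} []} \<subseteq> OT b 1" using assms by (simp add: OT_def)
qed

lemma OT_Suc_if_ins_at:
  assumes "T \<in> OT b n" "ins_at b (Suc n) u T T'" "1 \<le> b"
  shows "T' \<in> OT b (Suc n)"
proof -
  have T: "wf_bt b T" "incr T" "tsize T = n" "labels T = {1..n}" using assms(1) by (auto simp: OT_def)
  then have new: "Suc n \<notin> labels T" and "\<forall>x\<in>labels T. x < Suc n" by auto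
  then have "incr T'" using ins_at_incr[OF assms(2) T(1,2)] by blast
  moreover have "wf_bt b T'" using ins_at_wf_bt[OF assms(2,3) T(1) new] .
  moreover have "tsize T' = Suc n" using ins_at_tsize[OF assms(2) T(1) new] T(3) by simp
  moreover have "labels T' = {1..Suc n}" using ins_at_labels[OF assms(2)] T(4) by auto
  ultimately show ?thesis by (simp add: OT_def)
qed

lemma ins_at_exists_OT:
  assumes "T' \<in> OT b (Suc n)" "1 \<le> n"
  shows "\<exists>T\<in>OT b n. \<exists>u. ins_at b (Suc n) u T T'"
proof -
  have T': "wf_bt b T'" "incr T'" "tsize T' = Suc n" "labels T' = {1..Suc n}"
    using assms(1) by (auto simp: OT_def)
  moreover have "disjoint_labels T'" using assms(1) by (rule OT_disjoint_labels)
  moreover have "labels T' \<noteq> {Suc n}" using T'(4) assms(2) by auto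
  ultimately obtain T u where T: "ins_at b (Suc n) u T T'" "wf_bt b T" "incr T"
    and lab: "labels T = labels T' - {Suc n}"
    using ins_at_exists_pred[of b T' "Suc n"] by auto
  have "labels T = {1..n}" using lab T'(4) by auto
  moreover have "tsize T = n" using ins_at_tsize[OF T(1,2)] lab T'(3) by simp
  ultimately show ?thesis using T by (auto simp: OT_def)
qed

lemma OT_Suc_eq:
  assumes "1 \<le> b" "1 \<le> n"
  shows "OT b (Suc n) = (\<Union>T\<in>OT b n. {T'. \<exists>u. ins_at b (Suc n) u T T'})"
proof
  show "OT b (Suc n) \<subseteq> (\<Union>T\<in>OT b n. {T'. \<exists>u. ins_at b (Suc n) u T T'})"
  proof
    fix T' assume "T' \<in> OT b (Suc n)"
    then obtain T u where "T \<in> OT b n" "ins_at b (Suc n) u T T'"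
      using ins_at_exists_OT assms(2) by blast
    then show "T' \<in> (\<Union>T\<in>OT b n. {T'. \<exists>u. ins_at b (Suc n) u T T'})" by blast
  qed
  show "(\<Union>T\<in>OT b n. {T'. \<exists>u. ins_at b (Suc n) u T T'}) \<subseteq> OT b (Suc n)"
    using OT_Suc_if_ins_at[OF _ _ assms(1)] by blast
qed

lemma finite_OT:
  assumes "1 \<le> b"
  shows "finite (OT b n)"
proof (induction n)
  case (Suc n)
  show ?case
  proof (cases "n = 0")
    case True
    then show ?thesis using OT_1[OF assms] by simp
  next
    case False
    then have n: "1 \<le> n" by simp
    show ?thesis
      unfolding OT_Suc_eq[OF assms n] using Suc.IH by (simp add: finite_all_insertions)
  qed
qed (simp add: OT_0)

lemma sum_all_insertions:
  assumes "T \<in> OT b n"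
  shows "(\<Sum>T'\<in>{T'. \<exists>u. ins_at b (Suc n) u T T'}. f T')
       = (\<Sum>v\<in>buckets T. \<Sum>T'\<in>{T'. ins_at b (Suc n) v T T'}. f T')"
proof -
  from OT_insertable(3)[OF assms] show ?thesis unfolding all_insertions_eq
    by (intro sum.UNION_disjoint finite_buckets finite_insertions ballI impI)
      (use ins_at_unique_bucket in blast)
qed

lemma sum_OT_Suc:
  assumes "1 \<le> b" "1 \<le> n"
  shows "(\<Sum>T'\<in>OT b (Suc n). f T') = (\<Sum>T\<in>OT b n. \<Sum>T'\<in>{T'. \<exists>u. ins_at b (Suc n) u T T'}. f T')"
  unfolding OT_Suc_eq[OF assms]
proof (rule sum.UNION_disjoint)
  show "finite (OT b n)" using assms(1) by (rule finite_OT)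
  show "\<forall>T\<in>OT b n. finite {T'. \<exists>u. ins_at b (Suc n) u T T'}"
    using finite_all_insertions by blast
  show "\<forall>T1\<in>OT b n. \<forall>T2\<in>OT b n. T1 \<noteq> T2 \<longrightarrow>
    {T'. \<exists>u. ins_at b (Suc n) u T1 T'} \<inter> {T'. \<exists>u. ins_at b (Suc n) u T2 T'} = {}"
  proof (intro ballI impI)
    fix T1 T2 assume "T1 \<in> OT b n" "T2 \<in> OT b n" "T1 \<noteq> T2"
    moreover from this have "wf_bt b T1" "wf_bt b T2" "Suc n \<notin> labels T1" "Suc n \<notin> labels T2"
      by (auto simp: OT_def)
    ultimately show "{T'. \<exists>u. ins_at b (Suc n) u T1 T'} \<inter> {T'. \<exists>u. ins_at b (Suc n) u T2 T'} = {}"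
      using ins_at_unique_tree by blast
  qed
qed

section \<open>Unordered trees and the growth process\<close>

lemma ubuckets_unord: "ubuckets (unord T) = buckets T"
proof (induction T)
  case (LNode L ts)
  have "ubuckets ` unord ` set ts = buckets ` set ts"
    using LNode.IH by (force simp: image_image intro: image_cong)
  then show ?case by (simp add: image_image)
qed

lemma udeg_unord: "udeg (unord T) v = bdeg T v"
proof (induction T)
  case (LNode L ts)
  have "(\<Sum>t\<leftarrow>ts. udeg (unord t) v) = (\<Sum>t\<leftarrow>ts. bdeg t v)"
    using LNode.IH by (intro arg_cong[where f = sum_list] map_cong) auto
  then show ?case by (simp add: sum_mset_sum_list o_def flip: mset_map)
qed

lemma ugrow_notin: "S \<notin> ubuckets U \<Longrightarrow> ugrow b m S U = U"
proof (induction U)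
  case (UNode L cs)
  have "image_mset (ugrow b m S) cs = image_mset id cs"
    using UNode by (intro image_mset_cong) auto
  then show ?case using UNode.prems by auto
qed

lemma ugrow_unord_children_absent:
  "\<forall>t\<in>set ts. S \<notin> buckets t \<Longrightarrow>
   image_mset (ugrow b m S) (image_mset unord (mset ts)) = image_mset unord (mset ts)"
  by (induction ts) (simp_all add: ugrow_notin ubuckets_unord)

lemma bucket_notin_other_child:
  assumes "disjoint_labels (LNode L (xs @ t # ys))" "wf_bt b t" "S \<in> buckets t" "t' \<in> set xs \<union> set ys"
  shows "S \<notin> buckets t'"
  using disjoint_labels_other_child[OF assms(1,4)] bucket_subset_labels[of S]
    wf_bt_bucket_nonempty[OF assms(2,3)] assms(3) by blast

lemma unord_ins_at:
  "ins_at b m v T T' \<Longrightarrow> wf_bt b T \<Longrightarrow> disjoint_labels T \<Longrightarrow> unord T' = ugrow b m v (unord T)"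
proof (induction rule: ins_at_split_induct)
  case (down L S xs t ys t')
  have "S \<in> buckets t" using down.hyps(2) by (rule ins_at_in_buckets)
  moreover have "wf_bt b t" "disjoint_labels t" using down.prems by auto
  ultimately have "\<forall>t2\<in>set xs. S \<notin> buckets t2" "\<forall>t2\<in>set ys. S \<notin> buckets t2"
    using bucket_notin_other_child[OF down.prems(2)] by blast+
  then show ?case
    using down.hyps(1) down.IH \<open>wf_bt b t\<close> \<open>disjoint_labels t\<close>
    by (simp add: ugrow_unord_children_absent)
qed simp_all

lemma finite_reach: "finite (reach b n)"
proof (induction b n rule: reach.induct)
  case (3 b n)
  have "reach b (Suc (Suc n)) = (\<lambda>(U, S). ugrow b (Suc (Suc n)) S U) ` (SIGMA U:reach b (Suc n). ubuckets U)"
    by auto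
  moreover have "finite (ubuckets U)" for U by (induction U) auto
  ultimately show ?case using 3 by simp
qed simp_all

lemma unord_in_reach: "1 \<le> b \<Longrightarrow> T \<in> OT b n \<Longrightarrow> unord T \<in> reach b n"
proof (induction b n arbitrary: T rule: reach.induct)
  case (1 b)
  then show ?case by (simp add: OT_0)
next
  case (2 b)
  then show ?case using OT_1[of b] by simp
next
  case (3 b n)
  then obtain T0 u where T0: "T0 \<in> OT b (Suc n)" "ins_at b (Suc (Suc n)) u T0 T"
    using ins_at_exists_OT[of T b "Suc n"] by auto
  then have "unord T = ugrow b (Suc (Suc n)) u (unord T0)"
    using unord_ins_at OT_disjoint_labels by (fastforce simp: OT_def)
  moreover have "u \<in> ubuckets (unord T0)" using ins_at_in_buckets[OF T0(2)] by (simp add: ubuckets_unord)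
  ultimately show ?case using 3 T0(1) by auto
qed

lemma sum_reach_rt_law:
  assumes "1 \<le> b"
  shows "(\<Sum>U\<in>reach b n. rt_law \<phi> \<psi> b n U * g U)
       = (\<Sum>T\<in>OT b n. weight \<phi> \<psi> b T * g (unord T)) / Tn \<phi> \<psi> b n"
proof -
  have pointwise: "rt_law \<phi> \<psi> b n U * g U
      = (\<Sum>T\<in>OT b n. if unord T = U then weight \<phi> \<psi> b T * g U else 0) / Tn \<phi> \<psi> b n" for U
    by (simp add: rt_law_def sum_distrib_right if_distrib[where f = "\<lambda>x. x * g U"] cong: if_cong)
  have "(\<Sum>U\<in>reach b n. rt_law \<phi> \<psi> b n U * g U)
      = (\<Sum>U\<in>reach b n. \<Sum>T\<in>OT b n. if unord T = U then weight \<phi> \<psi> b T * g U else 0) / Tn \<phi> \<psi> b n"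
    by (simp only: pointwise sum_divide_distrib)
  also have "\<dots> = (\<Sum>T\<in>OT b n. \<Sum>U\<in>reach b n. if unord T = U then weight \<phi> \<psi> b T * g U else 0)
      / Tn \<phi> \<psi> b n"
    by (subst sum.swap) (rule refl)
  also have "\<dots> = (\<Sum>T\<in>OT b n. weight \<phi> \<psi> b T * g (unord T)) / Tn \<phi> \<psi> b n"
    using unord_in_reach[OF assms] finite_reach by simp
  finally show ?thesis .
qed

section \<open>Weights with affine attraction\<close>

definition node_weight :: "(nat \<Rightarrow> real) \<Rightarrow> (nat \<Rightarrow> real) \<Rightarrow> nat \<Rightarrow> nat \<Rightarrow> nat \<Rightarrow> real" where
  "node_weight \<phi> \<psi> b c k = (if c = b then \<phi> k else \<psi> c)"

lemma weight_LNode: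
  "weight \<phi> \<psi> b (LNode L ts) = node_weight \<phi> \<psi> b (card L) (length ts) * prod_list (map (weight \<phi> \<psi> b) ts)"
  by (simp add: node_weight_def)

declare weight.simps [simp del]

locale bucket_growth =
  fixes \<phi> \<psi> :: "nat \<Rightarrow> real" and b :: nat and a \<beta> :: real
  assumes b_pos: "1 \<le> b"
    and node_weight_leaf: "node_weight \<phi> \<psi> b 1 0 = 1"
    and node_weight_fill: "\<And>c. 1 \<le> c \<Longrightarrow> c < b \<Longrightarrow>
      node_weight \<phi> \<psi> b (Suc c) 0 = node_weight \<phi> \<psi> b c 0 * (a * real c + \<beta>)"
    and phi_Suc: "\<And>k. real (Suc k) * \<phi> (Suc k) = \<phi> k * (a * real b + \<beta> * (1 - real k))"
begin

definition attraction :: "nat \<Rightarrow> nat \<Rightarrow> real" where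
  "attraction c k = a * real c + \<beta> * (1 - real k)"

lemma sum_weight_insertions_root_unsat:
  assumes "card L < b" "wf_bt b (LNode L ts)" "m \<notin> L"
  shows "(\<Sum>T'\<in>{T'. ins_at b m L (LNode L ts) T'}. weight \<phi> \<psi> b T')
       = weight \<phi> \<psi> b (LNode L ts) * attraction (card L) (length ts)"
proof -
  have "ts = []" "1 \<le> card L" using assms(1,2) by auto
  moreover have "card (insert m L) = Suc (card L)"
    using assms(3) \<open>1 \<le> card L\<close> by (simp add: card_ge_0_finite)
  ultimately show ?thesis using node_weight_fill[of "card L"] assms(1)
    by (simp add: insertions_at_root_unsat weight_LNode attraction_def)
qed

lemma sum_weight_insertions_root_sat:
  assumes "card L = b" "LNode {m} [] \<notin> set ts"
  shows "(\<Sum>T'\<in>{T'. ins_at b m L (LNode L ts) T'}. weight \<phi> \<psi> b T')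
       = weight \<phi> \<psi> b (LNode L ts) * attraction (card L) (length ts)"
proof -
  let ?k = "length ts" and ?P = "prod_list (map (weight \<phi> \<psi> b) ts)"
  let ?g = "\<lambda>i. LNode L (take i ts @ LNode {m} [] # drop i ts)"
  have inj: "inj_on ?g {..?k}"
    by (rule inj_onI) (metis ltree.inject inj_onD[OF inj_on_insert_nth[OF assms(2)]])
  have leaf: "weight \<phi> \<psi> b (LNode {m} []) = 1" using node_weight_leaf by (simp add: weight_LNode)
  have "weight \<phi> \<psi> b (?g i) = \<phi> (Suc ?k) * ?P" if "i \<le> ?k" for i
    using that assms(1) leaf by (simp add: weight_LNode node_weight_def prod_list_map_take_drop)
  then have "(\<Sum>T'\<in>{T'. ins_at b m L (LNode L ts) T'}. weight \<phi> \<psi> b T') = real (Suc ?k) * \<phi> (Suc ?k) * ?P"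
    by (simp add: insertions_at_root_sat[OF assms(1)] sum.reindex[OF inj])
  also have "\<dots> = weight \<phi> \<psi> b (LNode L ts) * attraction (card L) ?k"
    using assms(1) phi_Suc[of ?k] by (simp add: weight_LNode node_weight_def attraction_def)
  finally show ?thesis .
qed

lemma sum_weight_insertions:
  "wf_bt b T \<Longrightarrow> disjoint_labels T \<Longrightarrow> m \<notin> labels T \<Longrightarrow> v \<in> buckets T \<Longrightarrow>
   (\<Sum>T'\<in>{T'. ins_at b m v T T'}. weight \<phi> \<psi> b T') = weight \<phi> \<psi> b T * attraction (card v) (bdeg T v)"
proof (induction T)
  case (LNode L ts)
  show ?case
  proof (cases "L = v")
    case True
    have "LNode {m} [] \<notin> set ts" using LNode.prems(3) by force
    then show ?thesis
      using True LNode.prems sum_weight_insertions_root_unsat sum_weight_insertions_root_sat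
      by (cases "card L < b") auto
  next
    case False
    then have "v \<in> (\<Union>t\<in>set ts. buckets t)" using LNode.prems(4) by simp
    then obtain i where i: "i < length ts" "v \<in> buckets (ts!i)" by (auto simp: in_set_conv_nth)
    let ?N = "node_weight \<phi> \<psi> b (card L) (length ts)"
      and ?R = "prod_list (map (weight \<phi> \<psi> b) (take i ts @ drop (Suc i) ts))"
    have child: "wf_bt b (ts!i)" "disjoint_labels (ts!i)" "m \<notin> labels (ts!i)"
      using LNode.prems(1-3) i(1) by (auto simp: list_all_iff)
    have inj: "inj_on (\<lambda>t'. LNode L (ts[i := t'])) A" for A
      by (rule inj_onI) (metis i(1) ltree.inject nth_list_update_eq)
    have w: "weight \<phi> \<psi> b (LNode L (ts[i := t'])) = ?N * ?R * weight \<phi> \<psi> b t'" for t'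
      by (simp add: weight_LNode prod_list_map_update[OF i(1)])
    have "(\<Sum>T'\<in>{T'. ins_at b m v (LNode L ts) T'}. weight \<phi> \<psi> b T')
        = (\<Sum>t'\<in>{t'. ins_at b m v (ts!i) t'}. ?N * ?R * weight \<phi> \<psi> b t')"
      by (simp add: insertions_in_child[OF LNode.prems(2,1) i] sum.reindex[OF inj] w)
    also have "\<dots> = ?N * ?R * (\<Sum>t'\<in>{t'. ins_at b m v (ts!i) t'}. weight \<phi> \<psi> b t')"
      by (simp add: sum_distrib_left)
    also have "\<dots> = ?N * ?R * weight \<phi> \<psi> b (ts!i) * attraction (card v) (bdeg (ts!i) v)"
      using LNode.IH[OF nth_mem[OF i(1)] child i(2)] by simp
    also have "\<dots> = weight \<phi> \<psi> b (LNode L ts) * attraction (card v) (bdeg (LNode L ts) v)"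
      using w[of "ts!i"] bdeg_child[OF LNode.prems(2,1) i] by simp
    finally show ?thesis .
  qed
qed

lemma sum_attraction_buckets:
  assumes "T \<in> OT b n"
  shows "(\<Sum>v\<in>buckets T. attraction (card v) (bdeg T v)) = a * real n + \<beta>"
proof -
  have "wf_bt b T" "disjoint_labels T" "tsize T = n"
    using assms OT_disjoint_labels by (auto simp: OT_def)
  then show ?thesis
    using sum_buckets_eq_tree_sum[of b T "\<lambda>v k. a * real (card v) + \<beta> * (1 - real k)"]
    by (simp add: attraction_def tree_sum_affine)
qed

lemma sum_weight_all_insertions:
  assumes "T \<in> OT b n"
  shows "(\<Sum>T'\<in>{T'. \<exists>u. ins_at b (Suc n) u T T'}. weight \<phi> \<psi> b T') = weight \<phi> \<psi> b T * (a * real n + \<beta>)"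
proof -
  have "wf_bt b T" "disjoint_labels T" "Suc n \<notin> labels T"
    using OT_insertable[OF assms] by simp_all
  then show ?thesis
    by (simp add: sum_all_insertions[OF assms] sum_weight_insertions sum_attraction_buckets[OF assms]
        flip: sum_distrib_left)
qed

lemma Tn_1: "Tn \<phi> \<psi> b 1 = 1"
  using node_weight_leaf OT_1[OF b_pos] by (simp add: Tn_def weight_LNode)

lemma Tn_Suc:
  assumes "1 \<le> n"
  shows "Tn \<phi> \<psi> b (Suc n) = (a * real n + \<beta>) * Tn \<phi> \<psi> b n"
proof -
  have "Tn \<phi> \<psi> b (Suc n) = (\<Sum>T\<in>OT b n. weight \<phi> \<psi> b T * (a * real n + \<beta>))"
    unfolding Tn_def sum_OT_Suc[OF b_pos assms] by (rule sum.cong[OF refl]) (rule sum_weight_all_insertions)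
  then show ?thesis by (simp add: Tn_def mult.commute flip: sum_distrib_right)
qed

lemma Tn_Suc_prod: "Tn \<phi> \<psi> b (Suc n) = (\<Prod>j=1..n. a * real j + \<beta>)"
proof (induction n)
  case 0
  show ?case using Tn_1 by simp
next
  case (Suc n)
  then show ?case by (simp add: Tn_Suc mult.commute)
qed

lemma pT_eq:
  assumes "T \<in> OT b n" "weight \<phi> \<psi> b T \<noteq> 0" "v \<in> buckets T"
  shows "pT \<phi> \<psi> b n T v = attraction (card v) (bdeg T v) / (a * real n + \<beta>)"
proof -
  have "wf_bt b T" "disjoint_labels T" "Suc n \<notin> labels T"
    using OT_insertable[OF assms(1)] by simp_all
  then show ?thesis
    using assms(2,3) by (simp add: pT_def sum_weight_insertions sum_weight_all_insertions[OF assms(1)])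
qed

lemma sum_weight_insertions_unord:
  assumes "T \<in> OT b n" "v \<in> buckets T"
  shows "(\<Sum>T'\<in>{T'. ins_at b (Suc n) v T T'}. if unord T' = U then weight \<phi> \<psi> b T' else 0)
       = (if ugrow b (Suc n) v (unord T) = U then weight \<phi> \<psi> b T * attraction (card v) (bdeg T v) else 0)"
proof -
  have T: "wf_bt b T" "disjoint_labels T" "Suc n \<notin> labels T"
    using OT_insertable[OF assms(1)] by simp_all
  have "(\<Sum>T'\<in>{T'. ins_at b (Suc n) v T T'}. if unord T' = U then weight \<phi> \<psi> b T' else 0)
      = (\<Sum>T'\<in>{T'. ins_at b (Suc n) v T T'}. if ugrow b (Suc n) v (unord T) = U then weight \<phi> \<psi> b T' else 0)"
    by (rule sum.cong[OF refl]) (simp add: unord_ins_at[OF _ T(1,2)])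
  also have "\<dots> = (if ugrow b (Suc n) v (unord T) = U then weight \<phi> \<psi> b T * attraction (card v) (bdeg T v) else 0)"
    using sum_weight_insertions[OF T assms(2)] by simp
  finally show ?thesis .
qed

lemma rt_law_Suc:
  assumes "1 \<le> n"
  shows "rt_law \<phi> \<psi> b (Suc n) U =
    (\<Sum>T\<in>OT b n. weight \<phi> \<psi> b T * (\<Sum>v\<in>buckets T.
        if ugrow b (Suc n) v (unord T) = U then attraction (card v) (bdeg T v) else 0))
    / ((a * real n + \<beta>) * Tn \<phi> \<psi> b n)"
proof -
  have "(\<Sum>T'\<in>OT b (Suc n). if unord T' = U then weight \<phi> \<psi> b T' else 0)
      = (\<Sum>T\<in>OT b n. \<Sum>v\<in>buckets T. \<Sum>T'\<in>{T'. ins_at b (Suc n) v T T'}.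
           if unord T' = U then weight \<phi> \<psi> b T' else 0)"
    unfolding sum_OT_Suc[OF b_pos assms] by (intro sum.cong refl sum_all_insertions)
  also have "\<dots> = (\<Sum>T\<in>OT b n. weight \<phi> \<psi> b T * (\<Sum>v\<in>buckets T.
        if ugrow b (Suc n) v (unord T) = U then attraction (card v) (bdeg T v) else 0))"
    by (intro sum.cong refl) (auto simp: sum_weight_insertions_unord sum_distrib_left intro!: sum.cong)
  finally show ?thesis by (simp add: rt_law_def Tn_Suc[OF assms])
qed

lemma gp_law_eq_rt_law:
  assumes p: "\<And>n c k. p n c k = attraction c k / (a * real n + \<beta>)"
  shows "gp_law b p (Suc n) U = rt_law \<phi> \<psi> b (Suc n) U"
proof (induction n arbitrary: U)
  case 0
  show ?case
    using node_weight_leaf OT_1[OF b_pos] Tn_1 by (auto simp: rt_law_def weight_LNode)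
next
  case (Suc n)
  let ?D = "a * real (Suc n) + \<beta>"
  let ?A = "\<lambda>T. \<Sum>v\<in>buckets T.
    if ugrow b (Suc (Suc n)) v (unord T) = U then attraction (card v) (bdeg T v) else 0"
  have step: "(\<Sum>S\<in>ubuckets (unord T). if ugrow b (Suc (Suc n)) S (unord T) = U
      then p (Suc n) (card S) (udeg (unord T) S) else 0) = ?A T / ?D" for T
  proof -
    have "(if c then x else 0) / d = (if c then x / d else 0)" for c and x d :: real by simp
    then show ?thesis by (simp add: ubuckets_unord udeg_unord p sum_divide_distrib cong: if_cong)
  qed
  have "gp_law b p (Suc (Suc n)) U = (\<Sum>V\<in>reach b (Suc n). rt_law \<phi> \<psi> b (Suc n) V *
      (\<Sum>S\<in>ubuckets V. if ugrow b (Suc (Suc n)) S V = U then p (Suc n) (card S) (udeg V S) else 0))"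
    using Suc.IH by simp
  also have "\<dots> = (\<Sum>T\<in>OT b (Suc n). weight \<phi> \<psi> b T * (?A T / ?D)) / Tn \<phi> \<psi> b (Suc n)"
    by (simp only: sum_reach_rt_law[OF b_pos] step)
  also have "\<dots> = (\<Sum>T\<in>OT b (Suc n). weight \<phi> \<psi> b T * ?A T) / (?D * Tn \<phi> \<psi> b (Suc n))"
    by (simp only: times_divide_eq_right sum_divide_distrib[symmetric] divide_divide_eq_left)
  also have "\<dots> = rt_law \<phi> \<psi> b (Suc (Suc n)) U"
    using rt_law_Suc[of "Suc n" U] by simp
  finally show ?case .
qed

lemma laws_agree:
  assumes p: "\<And>n c k. p n c k = attraction c k / (a * real n + \<beta>)"
  shows "laws_agree \<phi> \<psi> b p"
  unfolding laws_agree_def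
proof (intro allI impI)
  fix n :: nat and U assume "1 \<le> n"
  then obtain k where "n = Suc k" by (cases n) auto
  then show "gp_law b p n U = rt_law \<phi> \<psi> b n U" using gp_law_eq_rt_law[OF p] by simp
qed

lemma attraction_agrees:
  assumes p: "\<And>n c k. p n c k = attraction c k / (a * real n + \<beta>)"
  shows "attraction_agrees \<phi> \<psi> b p"
  unfolding attraction_agrees_def by (simp add: pT_eq p)

end

section \<open>Generating functions\<close>

lemma fact_power_gbinomial_eq_prod:
  fixes A s :: real
  shows "fact n * A ^ n * ((real n + s) gchoose n) = (\<Prod>j=1..n. A * real j + A * s)"
proof (induction n)
  case (Suc n)
  let ?G = "(real n + s) gchoose n" and ?G' = "(real (Suc n) + s) gchoose Suc n"
  have eq: "real (Suc n) + s - 1 = real n + s" by simp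
  have absorb: "real (Suc n) * ?G' = (real (Suc n) + s) * ?G"
    by (rule gbinomial_absorption[of n "real (Suc n) + s", unfolded eq])
  have "fact (Suc n) * A ^ Suc n * ?G' = fact n * A ^ n * A * (real (Suc n) * ?G')"
    by (simp only: fact_Suc power_Suc mult_ac)
  also have "\<dots> = fact n * A ^ n * ?G * (A * real (Suc n) + A * s)"
    by (simp only: absorb) (simp add: algebra_simps)
  finally show ?case using Suc.IH by simp
qed simp

lemma gbinomial_neg_ratio_mult_power:
  fixes a \<beta> :: real
  assumes "a \<noteq> 0"
  shows "((- \<beta> / a) gchoose Suc n) * (- a) ^ Suc n = \<beta> * (\<Prod>j=1..n. a * real j + \<beta>) / fact (Suc n)"
proof -
  have "((- \<beta> / a) gchoose Suc n) * (- a) ^ Suc n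
      = ((\<Prod>i=0..n. - \<beta> / a - real i) * (\<Prod>i=0..n. - a)) / fact (Suc n)"
    by (simp add: gbinomial_Suc)
  also have "(\<Prod>i=0..n. - \<beta> / a - real i) * (\<Prod>i=0..n. - a) = (\<Prod>i=0..n. (- \<beta> / a - real i) * (- a))"
    by (rule prod.distrib[symmetric])
  also have "\<dots> = (\<Prod>i=0..n. \<beta> + a * real i)"
    using assms by (intro prod.cong) (auto simp: field_simps)
  also have "{0..n} = insert 0 {1..n}" by auto
  also have "(\<Prod>i\<in>insert 0 {1..n}. \<beta> + a * real i) = \<beta> * (\<Prod>j=1..n. a * real j + \<beta>)"
    by (subst prod.insert) (auto simp: add.commute)
  finally show ?thesis .
qed

lemma sums_prod_affine_over_fact:
  fixes a \<beta> z :: real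
  assumes "a > 0" "\<beta> \<noteq> 0" "\<bar>z\<bar> < 1 / a"
  shows "(\<lambda>n. (\<Prod>j=1..n. a * real j + \<beta>) * z ^ Suc n / fact (Suc n))
           sums (((1 - a * z) powr (- \<beta> / a) - 1) / \<beta>)"
proof -
  let ?f = "\<lambda>n. ((- \<beta> / a) gchoose n) * (- a * z) ^ n"
  have "\<bar>- a * z\<bar> < 1" using assms by (simp add: abs_mult field_simps)
  then have "?f sums (1 + - a * z) powr (- \<beta> / a)" by (rule gen_binomial_real)
  then have "(\<lambda>n. ?f (Suc n)) sums ((1 + - a * z) powr (- \<beta> / a) - 1)"
    using sums_Suc_iff[of ?f] by simp
  then have "(\<lambda>n. ?f (Suc n) / \<beta>) sums (((1 + - a * z) powr (- \<beta> / a) - 1) / \<beta>)"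
    by (rule sums_divide)
  moreover have "?f (Suc n) / \<beta> = (\<Prod>j=1..n. a * real j + \<beta>) * z ^ Suc n / fact (Suc n)" for n
  proof -
    have "?f (Suc n) = ((- \<beta> / a) gchoose Suc n) * (- a) ^ Suc n * z ^ Suc n"
      by (simp only: power_mult_distrib mult.assoc)
    also have "\<dots> = \<beta> * (\<Prod>j=1..n. a * real j + \<beta>) / fact (Suc n) * z ^ Suc n"
      using gbinomial_neg_ratio_mult_power[of a \<beta> n] assms(1) by simp
    finally show ?thesis using assms(2) by simp
  qed
  ultimately show ?thesis by simp
qed

lemma (in bucket_growth) Tn_sums:
  assumes "a > 0" "\<beta> \<noteq> 0" "\<bar>z\<bar> < 1 / a"
  shows "(\<lambda>n. Tn \<phi> \<psi> b (Suc n) * z ^ Suc n / fact (Suc n)) sums (((1 - a * z) powr (- \<beta> / a) - 1) / \<beta>)"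
  using sums_prod_affine_over_fact[OF assms] by (simp add: Tn_Suc_prod)

lemma Suc_times_binomial_real:
  "real (Suc k) * real (N choose Suc k) = real (N choose k) * (real N - real k)"
proof (cases "k \<le> N")
  case True
  have nat: "Suc k * (N choose Suc k) = (N - k) * (N choose k)"
  proof (cases N)
    case (Suc n)
    then have "Suc k * (N choose Suc k) = N * ((N - 1) choose k)" using Suc_times_binomial[of k n] by simp
    also have "\<dots> = (N - k) * (N choose k)" by (rule binomial_absorb_comp[symmetric])
    finally show ?thesis .
  qed simp
  have "real (Suc k) * real (N choose Suc k) = real (Suc k * (N choose Suc k))" by (simp only: of_nat_mult)
  also have "\<dots> = real ((N - k) * (N choose k))" by (simp only: nat)
  also have "\<dots> = real (N choose k) * (real N - real k)" using True by (simp add: of_nat_diff)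
  finally show ?thesis .
qed (simp add: binomial_eq_0)

lemma sums_ln_inverse:
  fixes z :: real
  assumes "\<bar>z\<bar> < 1"
  shows "(\<lambda>n. fact n * z ^ Suc n / fact (Suc n)) sums ln (1 / (1 - z))"
proof -
  have "(\<lambda>n. - (z ^ n) / of_nat n) sums ln (1 - z)" using ln_series'[of "- z"] assms by simp
  then have "(\<lambda>n. z ^ n / of_nat n) sums (- ln (1 - z))" using sums_minus by fastforce
  then have "(\<lambda>n. z ^ Suc n / of_nat (Suc n)) sums (- ln (1 - z))"
    using sums_Suc_iff[of "\<lambda>n. z ^ n / of_nat n"] by simp
  moreover have "fact n * z ^ Suc n / fact (Suc n) = z ^ Suc n / of_nat (Suc n)" for n :: nat
    by (simp add: fact_Suc field_simps del: of_nat_Suc)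
  moreover have "- ln (1 - z) = ln (1 / (1 - z))" using assms by (simp add: ln_div)
  ultimately show ?thesis by simp
qed

section \<open>The three families\<close>

lemma bucket_recursive_growth:
  assumes "1 \<le> b"
  shows "bucket_growth (rec_phi b) rec_psi b 1 0"
proof unfold_locales
  show "1 \<le> b" by (rule assms)
  show "node_weight (rec_phi b) rec_psi b 1 0 = 1"
    by (simp add: node_weight_def rec_phi_def rec_psi_def)
  show "node_weight (rec_phi b) rec_psi b (Suc c) 0 = node_weight (rec_phi b) rec_psi b c 0 * (1 * real c + 0)"
    if c: "1 \<le> c" "c < b" for c
  proof -
    obtain c' where c': "c = Suc c'" using c(1) by (cases c) auto
    have "node_weight (rec_phi b) rec_psi b (Suc c) 0 = fact c"
      using c by (auto simp: node_weight_def rec_phi_def rec_psi_def)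
    moreover have "node_weight (rec_phi b) rec_psi b c 0 = fact (c - 1)"
      using c by (simp add: node_weight_def rec_psi_def)
    ultimately show ?thesis using c' by simp
  qed
  show "real (Suc k) * rec_phi b (Suc k) = rec_phi b k * (1 * real b + 0 * (1 - real k))" for k
  proof -
    have "real (Suc k) * rec_phi b (Suc k) = real (Suc k) * (fact (b - 1) * real b ^ Suc k) / (real (Suc k) * fact k)"
      unfolding rec_phi_def fact_Suc by (simp only: times_divide_eq_right)
    also have "\<dots> = fact (b - 1) * real b ^ Suc k / fact k"
      by (rule nonzero_mult_divide_mult_cancel_left) simp
    also have "\<dots> = rec_phi b k * real b" by (simp add: rec_phi_def mult_ac)
    finally show ?thesis by simp
  qed
qed

lemma rec_phi_sums: "(\<lambda>k. rec_phi b k * t ^ k) sums (fact (b - 1) * exp (real b * t))"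
proof -
  have "(\<lambda>k. fact (b - 1) * ((real b * t) ^ k /\<^sub>R fact k)) sums (fact (b - 1) * exp (real b * t))"
    using exp_converges[of "real b * t"] by (rule sums_mult)
  moreover have "rec_phi b k * t ^ k = fact (b - 1) * ((real b * t) ^ k /\<^sub>R fact k)" for k
    by (simp add: rec_phi_def power_mult_distrib divide_inverse)
  ultimately show ?thesis by simp
qed

theorem bucket_recursive_trees:
  assumes "1 \<le> b"
  shows "attraction_agrees (rec_phi b) rec_psi b rec_p
      \<and> laws_agree (rec_phi b) rec_psi b rec_p
      \<and> (\<forall>t::real. (\<lambda>k. rec_phi b k * t ^ k) sums (fact (b - 1) * exp (real b * t)))
      \<and> (\<forall>z::real. \<bar>z\<bar> < 1 \<longrightarrow>
           (\<lambda>n. Tn (rec_phi b) rec_psi b (Suc n) * z ^ Suc n / fact (Suc n)) sums ln (1 / (1 - z)))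
      \<and> (\<forall>n\<ge>1. Tn (rec_phi b) rec_psi b n = fact (n - 1))"
proof -
  interpret bucket_growth "rec_phi b" rec_psi b 1 0
    using assms by (rule bucket_recursive_growth)
  have p: "rec_p n c k = attraction c k / (1 * real n + 0)" for n c k
    by (simp add: rec_p_def attraction_def)
  have Tn_Suc_fact: "Tn (rec_phi b) rec_psi b (Suc n) = fact n" for n
    by (simp add: Tn_Suc_prod fact_prod)
  have "Tn (rec_phi b) rec_psi b n = fact (n - 1)" if "1 \<le> n" for n
    using that Tn_Suc_fact[of "n - 1"] by simp
  then show ?thesis
    using attraction_agrees[OF p] laws_agree[OF p] rec_phi_sums sums_ln_inverse
    by (simp add: Tn_Suc_fact)
qed

lemma dary_psi_Suc_eq_prod:
  assumes "d \<ge> 2"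
  shows "dary_psi d (Suc n) = (\<Prod>j=1..n. (real d - 1) * real j + 1)"
proof -
  have "(real d - 1) * (1 / (real d - 1)) = 1" using assms by simp
  then show ?thesis
    using fact_power_gbinomial_eq_prod[of n "real d - 1" "1 / (real d - 1)"] by (simp add: dary_psi_def)
qed

lemma dary_node_weight:
  "1 \<le> c \<Longrightarrow> c \<le> b \<Longrightarrow> node_weight (dary_phi b d) (dary_psi d) b c 0 = dary_psi d c"
  by (auto simp: node_weight_def dary_phi_def dary_psi_def)

lemma dary_growth:
  assumes b: "1 \<le> b" and d: "d \<ge> 2"
  shows "bucket_growth (dary_phi b d) (dary_psi d) b (real d - 1) 1"
proof unfold_locales
  show "1 \<le> b" by (rule b)
  show "node_weight (dary_phi b d) (dary_psi d) b 1 0 = 1"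
    using dary_node_weight[of 1 b d] b by (simp add: dary_psi_def)
  show "node_weight (dary_phi b d) (dary_psi d) b (Suc c) 0
      = node_weight (dary_phi b d) (dary_psi d) b c 0 * ((real d - 1) * real c + 1)"
    if c: "1 \<le> c" "c < b" for c
  proof -
    obtain c' where "c = Suc c'" using c(1) by (cases c) auto
    then have "dary_psi d (Suc c) = dary_psi d c * ((real d - 1) * real c + 1)"
      by (simp add: dary_psi_Suc_eq_prod[OF d])
    then show ?thesis using c dary_node_weight[of c b d] dary_node_weight[of "Suc c" b d] by simp
  qed
  show "real (Suc k) * dary_phi b d (Suc k) = dary_phi b d k * ((real d - 1) * real b + 1 * (1 - real k))"
    for k
  proof -
    let ?N = "b * (d - 1) + 1"
      and ?K = "fact (b - 1) * (real d - 1) ^ (b - 1) * ((real (b - 1) + 1 / (real d - 1)) gchoose (b - 1))"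
    have N: "real ?N - real k = (real d - 1) * real b + 1 * (1 - real k)"
      using d by (simp add: of_nat_diff algebra_simps)
    have "real (Suc k) * dary_phi b d (Suc k) = ?K * (real (Suc k) * real (?N choose Suc k))"
      by (simp add: dary_phi_def mult_ac)
    also have "\<dots> = ?K * (real (?N choose k) * (real ?N - real k))" by (simp only: Suc_times_binomial_real)
    also have "\<dots> = dary_phi b d k * (real ?N - real k)" by (simp add: dary_phi_def mult_ac)
    finally show ?thesis by (simp only: N)
  qed
qed

lemma dary_phi_sums:
  "(\<lambda>k. dary_phi b d k * t ^ k) sums
     (fact (b - 1) * (real d - 1) ^ (b - 1)
       * ((real (b - 1) + 1 / (real d - 1)) gchoose (b - 1)) * (1 + t) ^ (b * (d - 1) + 1))"
proof -
  let ?K = "fact (b - 1) * (real d - 1) ^ (b - 1) * ((real (b - 1) + 1 / (real d - 1)) gchoose (b - 1))"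
    and ?N = "b * (d - 1) + 1"
  have "(\<lambda>k. dary_phi b d k * t ^ k) sums (\<Sum>k\<le>?N. dary_phi b d k * t ^ k)"
    by (rule sums_finite) (auto simp: dary_phi_def)
  also have "(\<Sum>k\<le>?N. dary_phi b d k * t ^ k) = ?K * (\<Sum>k\<le>?N. real (?N choose k) * t ^ k * 1 ^ (?N - k))"
    unfolding dary_phi_def sum_distrib_left by (rule sum.cong) (simp_all add: mult_ac)
  also have "(\<Sum>k\<le>?N. real (?N choose k) * t ^ k * 1 ^ (?N - k)) = (1 + t) ^ ?N"
    by (simp only: binomial_ring[symmetric] add.commute)
  finally show ?thesis .
qed

theorem dary_increasing_trees:
  assumes b: "1 \<le> b" and d: "d \<ge> 2"
  shows "attraction_agrees (dary_phi b d) (dary_psi d) b (dary_p d)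
     \<and> laws_agree (dary_phi b d) (dary_psi d) b (dary_p d)
     \<and> (\<forall>t::real. (\<lambda>k. dary_phi b d k * t ^ k) sums
          (fact (b - 1) * (real d - 1) ^ (b - 1)
            * ((real (b - 1) + 1 / (real d - 1)) gchoose (b - 1)) * (1 + t) ^ (b * (d - 1) + 1)))
     \<and> (\<forall>z::real. \<bar>z\<bar> < 1 / (real d - 1) \<longrightarrow>
          (\<lambda>n. Tn (dary_phi b d) (dary_psi d) b (Suc n) * z ^ Suc n / fact (Suc n))
            sums ((1 - (real d - 1) * z) powr (- 1 / (real d - 1)) - 1))
     \<and> (\<forall>n\<ge>1. Tn (dary_phi b d) (dary_psi d) b n =
          fact (n - 1) * (real d - 1) ^ (n - 1) * ((real (n - 1) + 1 / (real d - 1)) gchoose (n - 1)))"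
proof -
  interpret bucket_growth "dary_phi b d" "dary_psi d" b "real d - 1" 1
    using b d by (rule dary_growth)
  have p: "dary_p d n c k = attraction c k / ((real d - 1) * real n + 1)" for n c k
    unfolding dary_p_def attraction_def by (simp add: algebra_simps)
  have "Tn (dary_phi b d) (dary_psi d) b n = dary_psi d n" if "1 \<le> n" for n
    using that Tn_Suc_prod[of "n - 1"] dary_psi_Suc_eq_prod[OF d, of "n - 1"] by simp
  then have Tn: "Tn (dary_phi b d) (dary_psi d) b n =
      fact (n - 1) * (real d - 1) ^ (n - 1) * ((real (n - 1) + 1 / (real d - 1)) gchoose (n - 1))"
    if "1 \<le> n" for n
    using that by (simp add: dary_psi_def)
  have "(\<lambda>n. Tn (dary_phi b d) (dary_psi d) b (Suc n) * z ^ Suc n / fact (Suc n))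
      sums ((1 - (real d - 1) * z) powr (- 1 / (real d - 1)) - 1)" if "\<bar>z\<bar> < 1 / (real d - 1)" for z
    using Tn_sums[OF _ _ that] d by simp
  then show ?thesis using attraction_agrees[OF p] laws_agree[OF p] dary_phi_sums Tn by blast
qed

lemma porr_psi_Suc_eq_prod:
  assumes "\<alpha> > 0"
  shows "porr_psi \<alpha> (Suc n) = (\<Prod>j=1..n. (\<alpha> + 1) * real j - 1)"
proof -
  have "(\<alpha> + 1) * (- (1 / (\<alpha> + 1))) = - 1" using assms by (simp add: field_simps)
  then show ?thesis
    using fact_power_gbinomial_eq_prod[of n "\<alpha> + 1" "- (1 / (\<alpha> + 1))"] by (simp add: porr_psi_def)
qed

lemma porr_node_weight:
  "1 \<le> c \<Longrightarrow> c \<le> b \<Longrightarrow> node_weight (porr_phi b \<alpha>) (porr_psi \<alpha>) b c 0 = porr_psi \<alpha> c"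
  by (auto simp: node_weight_def porr_phi_def porr_psi_def)

lemma porr_growth:
  assumes b: "1 \<le> b" and \<alpha>: "\<alpha> > 0"
  shows "bucket_growth (porr_phi b \<alpha>) (porr_psi \<alpha>) b (\<alpha> + 1) (- 1)"
proof unfold_locales
  show "1 \<le> b" by (rule b)
  show "node_weight (porr_phi b \<alpha>) (porr_psi \<alpha>) b 1 0 = 1"
    using porr_node_weight[of 1 b \<alpha>] b by (simp add: porr_psi_def)
  show "node_weight (porr_phi b \<alpha>) (porr_psi \<alpha>) b (Suc c) 0
      = node_weight (porr_phi b \<alpha>) (porr_psi \<alpha>) b c 0 * ((\<alpha> + 1) * real c + - 1)"
    if c: "1 \<le> c" "c < b" for c
  proof -
    obtain c' where "c = Suc c'" using c(1) by (cases c) auto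
    then have "porr_psi \<alpha> (Suc c) = porr_psi \<alpha> c * ((\<alpha> + 1) * real c + - 1)"
      by (simp add: porr_psi_Suc_eq_prod[OF \<alpha>])
    then show ?thesis using c porr_node_weight[of c b \<alpha>] porr_node_weight[of "Suc c" b \<alpha>] by simp
  qed
  show "real (Suc k) * porr_phi b \<alpha> (Suc k) = porr_phi b \<alpha> k * ((\<alpha> + 1) * real b + - 1 * (1 - real k))"
    for k
  proof -
    let ?x = "(\<alpha> + 1) * real b - 2 + real (Suc k)"
      and ?K = "fact (b - 1) * (\<alpha> + 1) ^ (b - 1) * ((real (b - 1) - 1 / (\<alpha> + 1)) gchoose (b - 1))"
    have x: "?x - 1 = (\<alpha> + 1) * real b - 2 + real k" and x': "?x = (\<alpha> + 1) * real b + - 1 * (1 - real k)"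
      by simp_all
    have "real (Suc k) * porr_phi b \<alpha> (Suc k) = ?K * (real (Suc k) * (?x gchoose Suc k))"
      by (simp add: porr_phi_def mult_ac)
    also have "\<dots> = ?K * (?x * ((?x - 1) gchoose k))" by (simp only: gbinomial_absorption)
    also have "\<dots> = porr_phi b \<alpha> k * ?x" by (simp only: x) (simp add: porr_phi_def mult_ac)
    finally show ?thesis by (simp only: x')
  qed
qed

lemma porr_phi_sums:
  assumes "\<bar>t\<bar> < 1"
  shows "(\<lambda>k. porr_phi b \<alpha> k * t ^ k) sums
          (fact (b - 1) * (\<alpha> + 1) ^ (b - 1) * ((real (b - 1) - 1 / (\<alpha> + 1)) gchoose (b - 1))
            / (1 - t) powr ((\<alpha> + 1) * real b - 1))"
proof -
  let ?K = "fact (b - 1) * (\<alpha> + 1) ^ (b - 1) * ((real (b - 1) - 1 / (\<alpha> + 1)) gchoose (b - 1))"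
    and ?e = "(\<alpha> + 1) * real b - 1"
  have "\<bar>- t\<bar> < 1" using assms by simp
  then have "(\<lambda>k. ((- ?e) gchoose k) * (- t) ^ k) sums (1 + - t) powr (- ?e)"
    by (rule gen_binomial_real)
  moreover have "((- ?e) gchoose k) * (- t) ^ k = (((\<alpha> + 1) * real b - 2 + real k) gchoose k) * t ^ k" for k
  proof -
    have "((- ?e) gchoose k) = (- 1) ^ k * ((real k - (- ?e) - 1) gchoose k)"
      by (rule gbinomial_negated_upper)
    also have "real k - (- ?e) - 1 = (\<alpha> + 1) * real b - 2 + real k" by simp
    finally have "((- ?e) gchoose k) * (- t) ^ k
        = ((- 1) ^ k * (- 1) ^ k) * ((((\<alpha> + 1) * real b - 2 + real k) gchoose k) * t ^ k)"
      by (simp add: power_minus[of t] mult_ac)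
    also have "(- 1 :: real) ^ k * (- 1) ^ k = 1" by (simp flip: power_mult_distrib)
    finally show ?thesis by simp
  qed
  ultimately have "(\<lambda>k. (((\<alpha> + 1) * real b - 2 + real k) gchoose k) * t ^ k) sums (1 - t) powr (- ?e)"
    by simp
  then have "(\<lambda>k. ?K * ((((\<alpha> + 1) * real b - 2 + real k) gchoose k) * t ^ k)) sums (?K * (1 - t) powr (- ?e))"
    by (rule sums_mult)
  moreover have "?K * (1 - t) powr (- ?e) = ?K / (1 - t) powr ?e"
    by (simp only: powr_minus divide_inverse)
  ultimately show ?thesis by (simp add: porr_phi_def mult_ac)
qed

theorem plane_oriented_recursive_trees:
  assumes b: "1 \<le> b" and \<alpha>: "\<alpha> > 0"
  shows "attraction_agrees (porr_phi b \<alpha>) (porr_psi \<alpha>) b (porr_p \<alpha>)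
     \<and> laws_agree (porr_phi b \<alpha>) (porr_psi \<alpha>) b (porr_p \<alpha>)
     \<and> (\<forall>t::real. \<bar>t\<bar> < 1 \<longrightarrow> (\<lambda>k. porr_phi b \<alpha> k * t ^ k) sums
          (fact (b - 1) * (\<alpha> + 1) ^ (b - 1) * ((real (b - 1) - 1 / (\<alpha> + 1)) gchoose (b - 1))
            / (1 - t) powr ((\<alpha> + 1) * real b - 1)))
     \<and> (\<forall>z::real. \<bar>z\<bar> < 1 / (\<alpha> + 1) \<longrightarrow>
          (\<lambda>n. Tn (porr_phi b \<alpha>) (porr_psi \<alpha>) b (Suc n) * z ^ Suc n / fact (Suc n))
            sums (1 - (1 - (\<alpha> + 1) * z) powr (1 / (\<alpha> + 1))))
     \<and> (\<forall>n\<ge>1. Tn (porr_phi b \<alpha>) (porr_psi \<alpha>) b n =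
          fact (n - 1) * (\<alpha> + 1) ^ (n - 1) * ((real (n - 1) - 1 / (\<alpha> + 1)) gchoose (n - 1)))"
proof -
  interpret bucket_growth "porr_phi b \<alpha>" "porr_psi \<alpha>" b "\<alpha> + 1" "- 1"
    using b \<alpha> by (rule porr_growth)
  have p: "porr_p \<alpha> n c k = attraction c k / ((\<alpha> + 1) * real n + - 1)" for n c k
    unfolding porr_p_def attraction_def by (simp add: algebra_simps)
  have "Tn (porr_phi b \<alpha>) (porr_psi \<alpha>) b n = porr_psi \<alpha> n" if "1 \<le> n" for n
    using that Tn_Suc_prod[of "n - 1"] porr_psi_Suc_eq_prod[OF \<alpha>, of "n - 1"] by simp
  then have Tn: "Tn (porr_phi b \<alpha>) (porr_psi \<alpha>) b n =
      fact (n - 1) * (\<alpha> + 1) ^ (n - 1) * ((real (n - 1) - 1 / (\<alpha> + 1)) gchoose (n - 1))"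
    if "1 \<le> n" for n
    using that by (simp add: porr_psi_def)
  have "(\<lambda>n. Tn (porr_phi b \<alpha>) (porr_psi \<alpha>) b (Suc n) * z ^ Suc n / fact (Suc n))
      sums (1 - (1 - (\<alpha> + 1) * z) powr (1 / (\<alpha> + 1)))" if "\<bar>z\<bar> < 1 / (\<alpha> + 1)" for z
    using Tn_sums[OF _ _ that] \<alpha> by simp
  then show ?thesis using attraction_agrees[OF p] laws_agree[OF p] porr_phi_sums Tn by blast
qed

theorem mainTheorem1:
  fixes b :: nat
  assumes b: "b \<ge> 1"
  shows
    \<comment> \<open>1. bucket recursive trees\<close>
    "(attraction_agrees (rec_phi b) rec_psi b rec_p
      \<and> laws_agree (rec_phi b) rec_psi b rec_p
      \<and> (\<forall>t::real. (\<lambda>k. rec_phi b k * t ^ k) sums (fact (b - 1) * exp (real b * t)))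
      \<and> (\<forall>z::real. \<bar>z\<bar> < 1 \<longrightarrow>
           (\<lambda>n. Tn (rec_phi b) rec_psi b (Suc n) * z ^ Suc n / fact (Suc n))
             sums ln (1 / (1 - z)))
      \<and> (\<forall>n\<ge>1. Tn (rec_phi b) rec_psi b n = fact (n - 1)))
   \<and>
    \<comment> \<open>2. (b,d)-ary increasing trees\<close>
    (\<forall>d::nat. d \<ge> 2 \<longrightarrow>
       attraction_agrees (dary_phi b d) (dary_psi d) b (dary_p d)
     \<and> laws_agree (dary_phi b d) (dary_psi d) b (dary_p d)
     \<and> (\<forall>t::real. (\<lambda>k. dary_phi b d k * t ^ k) sums
          (fact (b - 1) * (real d - 1) ^ (b - 1)
            * ((real (b - 1) + 1 / (real d - 1)) gchoose (b - 1)) * (1 + t) ^ (b * (d - 1) + 1)))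
     \<and> (\<forall>z::real. \<bar>z\<bar> < 1 / (real d - 1) \<longrightarrow>
          (\<lambda>n. Tn (dary_phi b d) (dary_psi d) b (Suc n) * z ^ Suc n / fact (Suc n))
            sums ((1 - (real d - 1) * z) powr (- 1 / (real d - 1)) - 1))
     \<and> (\<forall>n\<ge>1. Tn (dary_phi b d) (dary_psi d) b n =
          fact (n - 1) * (real d - 1) ^ (n - 1) * ((real (n - 1) + 1 / (real d - 1)) gchoose (n - 1))))
   \<and>
    \<comment> \<open>3. (b,alpha)-plane oriented recursive trees\<close>
    (\<forall>\<alpha>::real. \<alpha> > 0 \<longrightarrow>
       attraction_agrees (porr_phi b \<alpha>) (porr_psi \<alpha>) b (porr_p \<alpha>)
     \<and> laws_agree (porr_phi b \<alpha>) (porr_psi \<alpha>) b (porr_p \<alpha>)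
     \<and> (\<forall>t::real. \<bar>t\<bar> < 1 \<longrightarrow> (\<lambda>k. porr_phi b \<alpha> k * t ^ k) sums
          (fact (b - 1) * (\<alpha> + 1) ^ (b - 1) * ((real (b - 1) - 1 / (\<alpha> + 1)) gchoose (b - 1))
            / (1 - t) powr ((\<alpha> + 1) * real b - 1)))
     \<and> (\<forall>z::real. \<bar>z\<bar> < 1 / (\<alpha> + 1) \<longrightarrow>
          (\<lambda>n. Tn (porr_phi b \<alpha>) (porr_psi \<alpha>) b (Suc n) * z ^ Suc n / fact (Suc n))
            sums (1 - (1 - (\<alpha> + 1) * z) powr (1 / (\<alpha> + 1))))
     \<and> (\<forall>n\<ge>1. Tn (porr_phi b \<alpha>) (porr_psi \<alpha>) b n =
          fact (n - 1) * (\<alpha> + 1) ^ (n - 1) * ((real (n - 1) - 1 / (\<alpha> + 1)) gchoose (n - 1))))"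
  using bucket_recursive_trees[OF b] dary_increasing_trees[OF b] plane_oriented_recursive_trees[OF b]
  by blast

end
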